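(* Let $W_d$ be a subgroup of the Higman–Thompson group $V_d$ containing the commutator subgroup $[F_d,F_d]$. Then every non-trivial element of $W_d$ has infinitely many $[F_d,F_d]$-conjugates (so in particular $W_d$ is ICC); equivalently, the inclusion $L([F_d,F_d])\subseteq L(W_d)$ is irreducible. In particular, if $W_d$ contains $F_d$, then the inclusion $L(F_d)\subseteq L(W_d)$ is also irreducible.
   Context: Fix $d\ge 2$. A $d$-ary tree is a finite rooted tree in which each non-leaf vertex has exactly $d$ ordered children; leaves are numbered $1,\dots,n$ left to right; $T_k$ is $T$ with a $d$-ary caret attached to its $k$-th leaf. For $\sigma\in S_n$, $1\le k\le n$, partition $\{1,\dots,n+d-1\}$ into consecutive blocks $B^{(k)}_j=\{j\}$ ($j<k$), $B^{(k)}_k=\{k,\dots,k+d-1\}$, $B^{(k)}_j=\{j+d-1\}$ ($j>k$), and let $(\sigma)\varsigma_k^n\in S_{n+d-1}$ map $B^{(k)}_j$ onto $B^{(\sigma(k))}_{\sigma(j)}$ order-preservingly. The Higman–Thompson group $V_d$ is the group of classes $[T,\sigma,U]$ of triples with $T,U$ $d$-ary trees with $n$ leaves and $\sigma\in S_n$, under the equivalence generated by $(T,\sigma,U)\sim(T_{\sigma(k)},(\sigma)\varsigma_k^n,U_k)$, with product $[T,\sigma,U][U,\tau,W]=[T,\sigma\tau,W]$. $F_d$ is the subgroup of elements $[T,\mathrm{id},U]$, and $[F_d,F_d]$ its commutator subgroup. An inclusion of von Neumann algebras $N\subseteq M$ is irreducible if $N'\cap M\subseteq N$ (for a factor $N$: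 $N'\cap M=\mathbb{C}1$). $L(G)$ denotes the group von Neumann algebra. *)

theory Defs
  imports "HOL-Algebra.Algebra" "HOL-Combinatorics.Permutations"
begin

datatype tree = Leaf | Node "tree list"

fun dary :: "nat \<Rightarrow> tree \<Rightarrow> bool" where
  "dary d Leaf = True"
| "dary d (Node ts) = (length ts = d \<and> (\<forall>t\<in>set ts. dary d t))"

fun nleaves :: "tree \<Rightarrow> nat" where
  "nleaves Leaf = 1"
| "nleaves (Node ts) = sum_list (map nleaves ts)"

text \<open>attach d k T: T with a d-ary caret attached to its k-th leaf (leaves numbered
  1,2,... from left to right).\<close>
fun attach :: "nat \<Rightarrow> nat \<Rightarrow> tree \<Rightarrow> tree"
and attachs :: "nat \<Rightarrow> nat \<Rightarrow> tree list \<Rightarrow> tree list" where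
  "attach d k Leaf = (if k = 1 then Node (replicate d Leaf) else Leaf)"
| "attach d k (Node ts) = Node (attachs d k ts)"
| "attachs d k [] = []"
| "attachs d k (t # ts) = attach d k t # attachs d (k - nleaves t) ts"

text \<open>Index of the block B^(k)_j containing i.\<close>
definition blk :: "nat \<Rightarrow> nat \<Rightarrow> nat \<Rightarrow> nat" where
  "blk d k i = (if i < k then i else if i < k + d then k else i - (d - 1))"

definition bstart :: "nat \<Rightarrow> nat \<Rightarrow> nat \<Rightarrow> nat" where
  "bstart d k j = (if j < k then j else if j = k then k else j + d - 1)"

definition boff :: "nat \<Rightarrow> nat \<Rightarrow> nat \<Rightarrow> nat" where
  "boff d k i = (if k \<le> i \<and> i < k + d then i - k else 0)"

text \<open>(sigma) varsigma_k^n : maps B^(k)_j order-preservingly onto B^(sigma k)_(sigma j);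
  identity outside {1..n+d-1}.\<close>
definition sigma_ext :: "nat \<Rightarrow> nat \<Rightarrow> (nat \<Rightarrow> nat) \<Rightarrow> nat \<Rightarrow> nat \<Rightarrow> nat" where
  "sigma_ext d n \<sigma> k i =
     (if i \<in> {1..n + d - 1} then bstart d (\<sigma> k) (\<sigma> (blk d k i)) + boff d k i else i)"

type_synonym triple = "tree \<times> (nat \<Rightarrow> nat) \<times> tree"

definition valid :: "nat \<Rightarrow> triple set" where
  "valid d = {(T, \<sigma>, U). dary d T \<and> dary d U \<and> nleaves T = nleaves U
                         \<and> \<sigma> permutes {1..nleaves U}}"

definition expand :: "nat \<Rightarrow> triple rel" where
  "expand d = {((T, \<sigma>, U), (attach d (\<sigma> k) T, sigma_ext d (nleaves U) \<sigma> k, attach d k U))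
               | T \<sigma> U k. (T, \<sigma>, U) \<in> valid d \<and> 1 \<le> k \<and> k \<le> nleaves U}"

definition treq :: "nat \<Rightarrow> triple rel" where
  "treq d = Id_on (valid d) \<union> (expand d \<union> (expand d)\<inverse>)\<^sup>+"

definition cls :: "nat \<Rightarrow> triple \<Rightarrow> triple set" where
  "cls d x = treq d `` {x}"

text \<open>V_d with product [T,sigma,U][U,tau,W] = [T, sigma tau, W]; sigma tau is the
  composition (sigma tau)(i) = sigma(tau(i)), consistent with the convention that
  sigma maps leaf k of U to leaf sigma(k) of T in the expansion rule.\<close>
definition vmult :: "nat \<Rightarrow> triple set \<Rightarrow> triple set \<Rightarrow> triple set" where
  "vmult d a b = (THE c. \<exists>T \<sigma> U \<tau> W. (T, \<sigma>, U) \<in> a \<and> (U, \<tau>, W) \<in> b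
                            \<and> c = cls d (T, \<sigma> \<circ> \<tau>, W))"

definition V :: "nat \<Rightarrow> triple set monoid" where
  "V d = \<lparr> carrier = valid d // treq d, monoid.mult = vmult d, one = cls d (Leaf, id, Leaf) \<rparr>"

definition F :: "nat \<Rightarrow> triple set set" where
  "F d = {a \<in> carrier (V d). \<exists>T U. (T, id, U) \<in> a}"

definition conjugates :: "('a, 'b) monoid_scheme \<Rightarrow> 'a set \<Rightarrow> 'a \<Rightarrow> 'a set" where
  "conjugates G H g = {inv\<^bsub>G\<^esub> h \<otimes>\<^bsub>G\<^esub> g \<otimes>\<^bsub>G\<^esub> h | h. h \<in> H}"

end

(*
  Elements of V_d act faithfully on the Cantor space of infinite words over {0, ..., d - 1}:
  [T, sigma, U] replaces the prefix given by the k-th leaf of U by the sigma(k)-th leaf of T.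
  Two triples are equivalent exactly when they act in the same way (after expanding both domain
  trees to a common full tree, the range trees and permutations must agree), so V_d is a group of
  homeomorphisms.

  A nontrivial w moves some cone p X (the words beginning with p) off itself. The cones of
  q_n = p 0^n 1 are pairwise disjoint subcones of it, and in each of them the commutator c_n of
  two copies of the generator x_0 of F_d is supported and moves a point x_n. At x_n the conjugate c_m^-1 w c_m acts as w for m ~= n, but
  c_n^-1 w c_n does not; hence these [F_d, F_d]-conjugates of w are pairwise distinct.
*)

theory Submission
  imports Defs "HOL-Library.Stream" "HOL-Library.Sublist"
begin

section \<open>Leaf words and cones\<close>

fun leaf_words :: "tree \<Rightarrow> nat list list"
and leaf_words_from :: "nat \<Rightarrow> tree list \<Rightarrow> nat list list" where
  "leaf_words Leaf = [[]]"
| "leaf_words (Node ts) = leaf_words_from 0 ts"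
| "leaf_words_from i [] = []"
| "leaf_words_from i (t # ts) = map (Cons i) (leaf_words t) @ leaf_words_from (Suc i) ts"

lemma length_leaf_words:
  "length (leaf_words T) = nleaves T"
  "length (leaf_words_from i ts) = sum_list (map nleaves ts)"
  by (induction T and i ts rule: leaf_words_leaf_words_from.induct) auto

lemma set_leaf_words_from:
  "p \<in> set (leaf_words_from i ts) \<longleftrightarrow>
     (\<exists>j<length ts. \<exists>q. p = (i + j) # q \<and> q \<in> set (leaf_words (ts ! j)))"
proof (induction ts arbitrary: i)
  case (Cons t ts)
  show ?case
  proof
    assume "p \<in> set (leaf_words_from i (t # ts))"
    then show "\<exists>j<length (t # ts). \<exists>q. p = (i + j) # q \<and> q \<in> set (leaf_words ((t # ts) ! j))"
      using Cons[of "Suc i"] by (auto; metis add_Suc_right Suc_less_eq nth_Cons_Suc)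
  next
    assume "\<exists>j<length (t # ts). \<exists>q. p = (i + j) # q \<and> q \<in> set (leaf_words ((t # ts) ! j))"
    then obtain j q where j: "j < length (t # ts)" "p = (i + j) # q"
      "q \<in> set (leaf_words ((t # ts) ! j))"
      by blast
    then show "p \<in> set (leaf_words_from i (t # ts))"
      using Cons[of "Suc i"] by (cases j) auto
  qed
qed simp

lemma Cons_in_leaf_words_Node:
  "i # q \<in> set (leaf_words (Node ts)) \<longleftrightarrow> i < length ts \<and> q \<in> set (leaf_words (ts ! i))"
  by (auto simp: set_leaf_words_from)

lemma Nil_notin_leaf_words_Node: "[] \<notin> set (leaf_words (Node ts))"
  by (auto simp: set_leaf_words_from)

lemma leaf_words_prefix_free:
  "p \<in> set (leaf_words T) \<Longrightarrow> q \<in> set (leaf_words T) \<Longrightarrow> prefix p q \<Longrightarrow> p = q"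
proof (induction T arbitrary: p q)
  case (Node ts)
  from Node.prems(1) obtain i p' where p: "p = i # p'" "i < length ts"
    "p' \<in> set (leaf_words (ts ! i))"
    by (auto simp: set_leaf_words_from)
  from Node.prems(2) obtain j q' where q: "q = j # q'" "q' \<in> set (leaf_words (ts ! j))"
    by (auto simp: set_leaf_words_from)
  from Node.prems(3) p q have "i = j" "prefix p' q'" by auto
  with Node.IH[of "ts ! i" p' q'] p q show ?case by auto
qed simp

lemma distinct_leaf_words:
  "distinct (leaf_words T)" "distinct (leaf_words_from i ts)"
proof (induction T and i ts rule: leaf_words_leaf_words_from.induct)
  case (4 i t ts)
  have "set (map (Cons i) (leaf_words t)) \<inter> set (leaf_words_from (Suc i) ts) = {}"
    by (auto simp: set_leaf_words_from)
  with 4 show ?case by (auto simp: distinct_map)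
qed auto

lemma leaf_words_in_lists:
  "dary d T \<Longrightarrow> p \<in> set (leaf_words T) \<Longrightarrow> p \<in> lists {..<d}"
proof (induction T arbitrary: p)
  case (Node ts)
  from Node.prems obtain i p' where "p = i # p'" "i < length ts" "p' \<in> set (leaf_words (ts ! i))"
    by (auto simp: set_leaf_words_from)
  with Node.prems Node.IH[of "ts ! i" p'] show ?case by auto
qed simp

lemma dary_eqI_leaf_words:
  assumes "dary d T" "dary d T'" "set (leaf_words T) = set (leaf_words T')"
  shows "T = T'"
  using assms
proof (induction T arbitrary: T')
  case Leaf
  then show ?case
    using Nil_notin_leaf_words_Node by (cases T') auto
next
  case (Node ts)
  then obtain ts' where T': "T' = Node ts'"
    using Nil_notin_leaf_words_Node by (cases T') auto
  have len: "length ts = length ts'" using Node.prems T' by auto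
  have "ts ! i = ts' ! i" if "i < length ts" for i
  proof -
    have "q \<in> set (leaf_words (ts ! i)) \<longleftrightarrow> q \<in> set (leaf_words (ts' ! i))" for q
      using Cons_in_leaf_words_Node[of i q ts] Cons_in_leaf_words_Node[of i q ts'] Node.prems(3) T'
        that len
      by simp
    then have "set (leaf_words (ts ! i)) = set (leaf_words (ts' ! i))" by blast
    then show ?thesis using Node.IH[of "ts ! i" "ts' ! i"] Node.prems T' that len by auto
  qed
  then show ?case using len T' by (simp add: nth_equalityI)
qed

definition cone :: "nat list \<Rightarrow> nat stream set" where
  "cone p = {x. stake (length p) x = p}"

lemma sdrop_in_streams: "x \<in> streams A \<Longrightarrow> sdrop n x \<in> streams A"
  by (simp add: streams_iff_snth sdrop_snth)

lemma shift_in_cone [simp]: "p @- y \<in> cone p"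
  by (simp add: cone_def stake_shift)

lemma shift_sdrop_cone: "x \<in> cone p \<Longrightarrow> p @- sdrop (length p) x = x"
  unfolding cone_def using stake_sdrop[of "length p" x] by simp

lemma cone_Cons: "x \<in> cone (a # p) \<longleftrightarrow> shd x = a \<and> stl x \<in> cone p"
  by (cases x) (simp add: cone_def)

lemma shift_in_cone_append: "p @- x \<in> cone (p @ q) \<longleftrightarrow> x \<in> cone q"
  by (simp add: cone_def stake_shift)

lemma cone_iff_snth: "x \<in> cone p \<longleftrightarrow> (\<forall>i<length p. x !! i = p ! i)"
  unfolding cone_def by (simp add: list_eq_iff_nth_eq)

lemma cone_append_subset: "cone (p @ q) \<subseteq> cone p"
  by (auto simp: cone_iff_snth nth_append)

lemma prefix_or_prefix_if_cones:
  assumes "x \<in> cone p" "x \<in> cone q"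
  shows "prefix p q \<or> prefix q p"
proof -
  have "prefix u v" if "x \<in> cone u" "x \<in> cone v" "length u \<le> length v" for u v
  proof -
    have "u = take (length u) v"
      using that take_stake[of "length u" "length v" x] by (simp add: cone_def min_absorb1)
    then show ?thesis using take_is_prefix[of "length u" v] by simp
  qed
  then show ?thesis using assms by (cases "length p \<le> length q") auto
qed

lemma cones_disjoint: "\<not> prefix p q \<Longrightarrow> \<not> prefix q p \<Longrightarrow> cone p \<inter> cone q = {}"
  using prefix_or_prefix_if_cones by blast

lemma escaping_letter:
  fixes u t :: "nat list"
  assumes "u \<noteq> t"
  obtains a where "a \<le> 1" "\<And>y. t @- a ## y \<notin> cone (u @ [a])"
proof -
  define c where "c = (if length u < length t then t ! length u
    else if length t < length u then u ! length t else 0)"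
  define a where "a = (if c = 0 then 1 else 0 :: nat)"
  have "t @- a ## y \<notin> cone (u @ [a])" for y
  proof
    assume "t @- a ## y \<in> cone (u @ [a])"
    then have same: "(t @- a ## y) !! i = (u @ [a]) ! i" if "i \<le> length u" for i
      using that by (auto simp: cone_iff_snth)
    consider "length u < length t" | "length t < length u" | "length u = length t" by linarith
    then show False
    proof cases
      case 1
      then show False using same[of "length u"] by (simp add: c_def a_def split: if_splits)
    next
      case 2
      then show False using same[of "length t"]
        by (simp add: c_def a_def nth_append split: if_splits)
    next
      case 3
      have "u ! i = t ! i" if "i < length u" for i using same[of i] that 3 by (simp add: nth_append)
      then have "u = t" using 3 by (simp add: list_eq_iff_nth_eq)
      then show False using assms by simp
    qed
  qed
  then show ?thesis using that[of a] by (simp add: a_def)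
qed

lemma not_prefix_replicate_append:
  "m \<noteq> n \<Longrightarrow> \<not> prefix (replicate m (0::nat) @ [1]) (replicate n 0 @ [1])"
proof (induction m arbitrary: n)
  case 0
  then show ?case by (cases n) auto
next
  case (Suc m)
  then show ?case by (cases n) auto
qed

definition leaf_word :: "tree \<Rightarrow> nat \<Rightarrow> nat list" where
  "leaf_word T k = leaf_words T ! (k - 1)"

lemma leaf_word_in_set: "1 \<le> k \<Longrightarrow> k \<le> nleaves T \<Longrightarrow> leaf_word T k \<in> set (leaf_words T)"
  by (simp add: leaf_word_def length_leaf_words)

lemma in_leaf_words_iff:
  "p \<in> set (leaf_words T) \<longleftrightarrow> (\<exists>k. 1 \<le> k \<and> k \<le> nleaves T \<and> p = leaf_word T k)"
proof
  assume "p \<in> set (leaf_words T)"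
  then obtain j where "j < nleaves T" "p = leaf_words T ! j"
    by (auto simp: in_set_conv_nth length_leaf_words)
  then show "\<exists>k. 1 \<le> k \<and> k \<le> nleaves T \<and> p = leaf_word T k"
    by (intro exI[of _ "Suc j"]) (simp add: leaf_word_def)
qed (auto simp: leaf_word_in_set)

lemma leaf_word_in_lists: "dary d T \<Longrightarrow> 1 \<le> k \<Longrightarrow> k \<le> nleaves T \<Longrightarrow> leaf_word T k \<in> lists {..<d}"
  using leaf_words_in_lists leaf_word_in_set by blast

lemma leaf_word_inj:
  "1 \<le> j \<Longrightarrow> j \<le> nleaves T \<Longrightarrow> 1 \<le> k \<Longrightarrow> k \<le> nleaves T \<Longrightarrow> leaf_word T j = leaf_word T k \<Longrightarrow> j = k"
  using distinct_leaf_words(1)[of T] nth_eq_iff_index_eq[of "leaf_words T" "j - 1" "k - 1"]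
  by (simp add: leaf_word_def length_leaf_words) arith

lemma leaf_words_cover:
  "dary d T \<Longrightarrow> x \<in> streams {..<d} \<Longrightarrow> \<exists>p\<in>set (leaf_words T). x \<in> cone p"
proof (induction T arbitrary: x)
  case (Node ts)
  have i: "shd x < length ts" using Node.prems streams_shd by fastforce
  obtain p where "p \<in> set (leaf_words (ts ! shd x))" "stl x \<in> cone p"
    using Node.IH[of "ts ! shd x" "stl x"] Node.prems i streams_stl by fastforce
  then show ?case using i Cons_in_leaf_words_Node cone_Cons by blast
qed (simp add: cone_def)

lemma leaf_word_shift_decomp:
  assumes "dary d T" "x \<in> streams {..<d}"
  obtains k y where "1 \<le> k" "k \<le> nleaves T" "y \<in> streams {..<d}" "x = leaf_word T k @- y"
proof -
  obtain p where p: "p \<in> set (leaf_words T)" "x \<in> cone p" using leaf_words_cover[OF assms] by blast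
  then obtain k where k: "1 \<le> k" "k \<le> nleaves T" "p = leaf_word T k"
    by (auto simp: in_leaf_words_iff)
  show ?thesis
  proof (rule that)
    show "x = leaf_word T k @- sdrop (length p) x" using k p shift_sdrop_cone by simp
  qed (use k sdrop_in_streams assms(2) in auto)
qed

lemma leaf_word_cone_unique:
  assumes "1 \<le> j" "j \<le> nleaves T" "1 \<le> k" "k \<le> nleaves T"
    and "x \<in> cone (leaf_word T j)" "x \<in> cone (leaf_word T k)"
  shows "j = k"
proof -
  have "prefix (leaf_word T j) (leaf_word T k) \<or> prefix (leaf_word T k) (leaf_word T j)"
    using prefix_or_prefix_if_cones assms(5,6) by blast
  then have "leaf_word T j = leaf_word T k"
    using leaf_words_prefix_free leaf_word_in_set assms(1-4) by metis
  then show ?thesis using leaf_word_inj assms(1-4) by blast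
qed

lemma leaf_words_from_replicate_Leaf:
  "leaf_words_from i (replicate m Leaf) = map (\<lambda>a. [a]) [i..<i+m]"
  by (induction m arbitrary: i) (auto simp: upt_rec)

lemma leaf_words_from_append:
  "leaf_words_from i (xs @ ys) = leaf_words_from i xs @ leaf_words_from (i + length xs) ys"
  by (induction xs arbitrary: i) auto

lemma attach_out_of_range:
  "k = 0 \<or> nleaves T < k \<Longrightarrow> attach d k T = T"
  "k = 0 \<or> sum_list (map nleaves ts) < k \<Longrightarrow> attachs d k ts = ts"
  by (induction d k T and d k ts rule: attach_attachs.induct) auto

lemma nleaves_attach:
  "d \<ge> 1 \<Longrightarrow> 1 \<le> k \<Longrightarrow> k \<le> nleaves T \<Longrightarrow> nleaves (attach d k T) = nleaves T + (d - 1)"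
  "d \<ge> 1 \<Longrightarrow> 1 \<le> k \<Longrightarrow> k \<le> sum_list (map nleaves ts) \<Longrightarrow>
     sum_list (map nleaves (attachs d k ts)) = sum_list (map nleaves ts) + (d - 1)"
proof (induction d k T and d k ts rule: attach_attachs.induct)
  case (4 d k t ts)
  show ?case
  proof (cases "k \<le> nleaves t")
    case True
    then show ?thesis using 4 attach_out_of_range(2)[of "k - nleaves t" ts d] by auto
  next
    case False
    then show ?thesis using 4 attach_out_of_range(1)[of k t d] by auto
  qed
qed (auto simp: sum_list_replicate)

lemma dary_attach:
  "dary d T \<Longrightarrow> dary d (attach d k T)"
  "\<forall>t\<in>set ts. dary d t \<Longrightarrow> length (attachs d k ts) = length ts \<and> (\<forall>t\<in>set (attachs d k ts). dary d t)"
  by (induction d k T and d k ts rule: attach_attachs.induct) auto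

lemma leaf_words_attach:
  "leaf_words (attach d k T) = (if 1 \<le> k \<and> k \<le> nleaves T
     then take (k - 1) (leaf_words T) @ map (\<lambda>a. leaf_words T ! (k - 1) @ [a]) [0..<d]
          @ drop k (leaf_words T)
     else leaf_words T)"
  "\<forall>i. leaf_words_from i (attachs d k ts) = (if 1 \<le> k \<and> k \<le> sum_list (map nleaves ts)
     then take (k - 1) (leaf_words_from i ts)
          @ map (\<lambda>a. leaf_words_from i ts ! (k - 1) @ [a]) [0..<d]
          @ drop k (leaf_words_from i ts)
     else leaf_words_from i ts)"
proof (induction d k T and d k ts rule: attach_attachs.induct)
  case (1 d k)
  then show ?case by (auto simp: leaf_words_from_replicate_Leaf)
next
  case (4 d k t ts)
  show ?case
  proof
    fix i
    consider "k = 0 \<or> sum_list (map nleaves (t # ts)) < k" | "1 \<le> k" "k \<le> nleaves t"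
      | "nleaves t < k" "k \<le> sum_list (map nleaves (t # ts))"
      by force
    then show "leaf_words_from i (attachs d k (t # ts)) =
      (if 1 \<le> k \<and> k \<le> sum_list (map nleaves (t # ts))
       then take (k - 1) (leaf_words_from i (t # ts))
            @ map (\<lambda>a. leaf_words_from i (t # ts) ! (k - 1) @ [a]) [0..<d]
            @ drop k (leaf_words_from i (t # ts))
       else leaf_words_from i (t # ts))"
    proof cases
      case 1
      then show ?thesis using attach_out_of_range(2)[of k "t # ts" d] by auto
    next
      case 2
      have "attachs d (k - nleaves t) ts = ts" using 2 attach_out_of_range(2) by simp
      moreover have "k - 1 < length (leaf_words t)" using 2 by (simp add: length_leaf_words)
      ultimately show ?thesis using 2 4(1)
        by (simp add: length_leaf_words nth_append take_map drop_map)
    next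
      case 3
      have "attach d k t = t" using 3 attach_out_of_range(1) by simp
      moreover have "\<not> k - 1 < length (leaf_words t)"
        "k - 1 - length (leaf_words t) = k - nleaves t - 1"
        using 3 by (auto simp: length_leaf_words)
      ultimately show ?thesis using 3 4(2)[rule_format, of "Suc i"]
        by (auto simp: length_leaf_words nth_append)
    qed
  qed
qed auto

lemma leaf_word_attach_other:
  assumes "d \<ge> 1" "1 \<le> m" "m \<le> nleaves U" "1 \<le> j" "j \<le> nleaves U" "j \<noteq> m"
  shows "leaf_word (attach d m U) (bstart d m j) = leaf_word U j"
  using assms leaf_words_attach(1)[of d m U]
  by (auto simp: leaf_word_def bstart_def nth_append length_leaf_words min_def)

lemma leaf_word_attach_same:
  assumes "1 \<le> m" "m \<le> nleaves U" "i < d"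
  shows "leaf_word (attach d m U) (m + i) = leaf_word U m @ [i]"
  using assms leaf_words_attach(1)[of d m U]
  by (auto simp: leaf_word_def nth_append length_leaf_words min_def)

lemma block_decomp:
  assumes "d \<ge> 1" "1 \<le> k" "k \<le> n" "1 \<le> i" "i \<le> n + d - 1"
  shows "bstart d k (blk d k i) + boff d k i = i" "1 \<le> blk d k i" "blk d k i \<le> n"
    "boff d k i < d" "blk d k i \<noteq> k \<Longrightarrow> boff d k i = 0"
  using assms by (auto simp: bstart_def blk_def boff_def)

lemma block_of_bstart:
  assumes "d \<ge> 1" "1 \<le> m" "m \<le> n" "1 \<le> j" "j \<le> n" "c < d" "j \<noteq> m \<Longrightarrow> c = 0"
  shows "blk d m (bstart d m j + c) = j" "boff d m (bstart d m j + c) = c"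
    "1 \<le> bstart d m j + c" "bstart d m j + c \<le> n + d - 1"
  using assms by (auto simp: bstart_def blk_def boff_def)

lemma permutes_in_interval: "\<sigma> permutes {1..n} \<Longrightarrow> 1 \<le> k \<Longrightarrow> k \<le> n \<Longrightarrow> 1 \<le> \<sigma> k \<and> \<sigma> k \<le> n"
  using permutes_in_image[of \<sigma> "{1..n}" k] by auto

lemma sigma_ext_permutes:
  assumes "d \<ge> 1" "\<sigma> permutes {1..n}" "1 \<le> k" "k \<le> n"
  shows "sigma_ext d n \<sigma> k permutes {1..n + d - 1}"
proof -
  define s where "s = sigma_ext d n \<sigma> k"
  define S where "S = {1..n + d - 1}"
  have img: "s i \<in> S \<and> blk d (\<sigma> k) (s i) = \<sigma> (blk d k i) \<and> boff d (\<sigma> k) (s i) = boff d k i"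
    if "i \<in> S" for i
  proof -
    have i: "1 \<le> i" "i \<le> n + d - 1" using that by (auto simp: S_def)
    note b = block_decomp[OF assms(1,3,4) i]
    have "1 \<le> \<sigma> (blk d k i)" "\<sigma> (blk d k i) \<le> n"
      using permutes_in_interval[OF assms(2) b(2,3)] by auto
    moreover have "\<sigma> (blk d k i) \<noteq> \<sigma> k \<Longrightarrow> boff d k i = 0"
      using b(5) by (cases "blk d k i = k") simp_all
    moreover have "s i = bstart d (\<sigma> k) (\<sigma> (blk d k i)) + boff d k i"
      using that by (simp add: sigma_ext_def s_def S_def)
    moreover have "1 \<le> \<sigma> k" "\<sigma> k \<le> n" using permutes_in_interval[OF assms(2-4)] by auto
    ultimately show ?thesis
      using block_of_bstart[OF assms(1), of "\<sigma> k" n "\<sigma> (blk d k i)" "boff d k i"] b(4)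
      by (simp add: S_def)
  qed
  have "inj_on s S"
  proof
    fix i i' assume ii: "i \<in> S" "i' \<in> S" "s i = s i'"
    then have "\<sigma> (blk d k i) = \<sigma> (blk d k i')" "boff d k i = boff d k i'"
      using img[OF ii(1)] img[OF ii(2)] ii(3) by simp_all
    then have "blk d k i = blk d k i'" "boff d k i = boff d k i'"
      using permutes_inj[OF assms(2)] by (simp_all add: inj_eq)
    moreover have "bstart d k (blk d k j) + boff d k j = j" if "j \<in> S" for j
      using block_decomp(1)[OF assms(1,3,4), of j] that by (simp add: S_def)
    ultimately show "i = i'" using ii(1,2) by metis
  qed
  moreover have "s ` S = S"
    using endo_inj_surj[of S s] img \<open>inj_on s S\<close> by (force simp: S_def)
  moreover have "\<And>x. x \<notin> S \<Longrightarrow> s x = x" unfolding sigma_ext_def s_def S_def by presburger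
  ultimately show ?thesis unfolding s_def S_def
    by (intro bij_imp_permutes) (auto simp: bij_betw_def)
qed

lemma sigma_ext_bstart:
  assumes "d \<ge> 1" "1 \<le> k" "k \<le> n" "1 \<le> j" "j \<le> n" "j \<noteq> k"
  shows "sigma_ext d n \<sigma> k (bstart d k j) = bstart d (\<sigma> k) (\<sigma> j)"
proof -
  have "blk d k (bstart d k j) = j" "boff d k (bstart d k j) = 0"
    "1 \<le> bstart d k j" "bstart d k j \<le> n + d - 1"
    using block_of_bstart[OF assms(1-5), of 0] assms(1,6) by auto
  then show ?thesis by (simp add: sigma_ext_def)
qed

lemma sigma_ext_same:
  assumes "d \<ge> 1" "1 \<le> k" "k \<le> n" "i < d"
  shows "sigma_ext d n \<sigma> k (k + i) = \<sigma> k + i"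
  using assms by (auto simp: sigma_ext_def bstart_def blk_def boff_def)

lemma sigma_ext_id: "d \<ge> 1 \<Longrightarrow> 1 \<le> k \<Longrightarrow> k \<le> n \<Longrightarrow> sigma_ext d n id k = id"
  using block_decomp(1) by (auto simp: sigma_ext_def fun_eq_iff)

section \<open>The action on Cantor space\<close>

text \<open>The else-branch is junk: for a valid triple it is never taken on \<open>streams {..<d}\<close>.\<close>

definition tree_act :: "triple \<Rightarrow> nat stream \<Rightarrow> nat stream" where
  "tree_act r x = (case r of (T, \<sigma>, U) \<Rightarrow>
     (if \<exists>k. 1 \<le> k \<and> k \<le> nleaves U \<and> x \<in> cone (leaf_word U k)
      then (let k = (THE k. 1 \<le> k \<and> k \<le> nleaves U \<and> x \<in> cone (leaf_word U k))
            in leaf_word T (\<sigma> k) @- sdrop (length (leaf_word U k)) x)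
      else x))"

lemma tree_act_leaf:
  assumes "1 \<le> k" "k \<le> nleaves U"
  shows "tree_act (T, \<sigma>, U) (leaf_word U k @- y) = leaf_word T (\<sigma> k) @- y"
proof -
  let ?x = "leaf_word U k @- y"
  have "(THE k. 1 \<le> k \<and> k \<le> nleaves U \<and> ?x \<in> cone (leaf_word U k)) = k"
    using assms leaf_word_cone_unique[of _ U k ?x] by (intro the_equality) auto
  then show ?thesis unfolding tree_act_def using assms by (auto simp: sdrop_shift)
qed

lemma mem_valid:
  "(T, \<sigma>, U) \<in> valid d \<longleftrightarrow> dary d T \<and> dary d U \<and> nleaves T = nleaves U \<and> \<sigma> permutes {1..nleaves U}"
  by (simp add: valid_def)

lemma tree_act_in_streams:
  assumes "r \<in> valid d" "x \<in> streams {..<d}"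
  shows "tree_act r x \<in> streams {..<d}"
proof -
  obtain T \<sigma> U where r: "r = (T, \<sigma>, U)" by (cases r)
  then have v: "dary d T" "dary d U" "nleaves T = nleaves U" "\<sigma> permutes {1..nleaves U}"
    using assms(1) by (auto simp: mem_valid)
  obtain k y where k: "1 \<le> k" "k \<le> nleaves U" "y \<in> streams {..<d}" "x = leaf_word U k @- y"
    using leaf_word_shift_decomp[OF v(2) assms(2)] by blast
  have "1 \<le> \<sigma> k" "\<sigma> k \<le> nleaves T" using permutes_in_interval[OF v(4) k(1,2)] v(3) by auto
  then show ?thesis
    using k r tree_act_leaf[OF k(1,2)] shift_streams leaf_word_in_lists[OF v(1)] by metis
qed

lemma valid_expansion:
  assumes "d \<ge> 1" "(T, \<sigma>, U) \<in> valid d" "1 \<le> k" "k \<le> nleaves U"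
  shows "(attach d (\<sigma> k) T, sigma_ext d (nleaves U) \<sigma> k, attach d k U) \<in> valid d"
proof -
  have v: "dary d T" "dary d U" "nleaves T = nleaves U" "\<sigma> permutes {1..nleaves U}"
    using assms(2) by (auto simp: mem_valid)
  have "1 \<le> \<sigma> k" "\<sigma> k \<le> nleaves T" using permutes_in_interval[OF v(4) assms(3,4)] v(3) by auto
  then show ?thesis
    using dary_attach(1)[OF v(1)] dary_attach(1)[OF v(2)] nleaves_attach(1)[OF assms(1)] assms v
      sigma_ext_permutes[OF assms(1) v(4) assms(3,4)]
    by (auto simp: mem_valid)
qed

lemma tree_act_expansion_other_leaf:
  assumes "d \<ge> 1" "(T, \<sigma>, U) \<in> valid d" "1 \<le> k" "k \<le> nleaves U" "1 \<le> j" "j \<le> nleaves U" "j \<noteq> k"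
  shows "tree_act (attach d (\<sigma> k) T, sigma_ext d (nleaves U) \<sigma> k, attach d k U) (leaf_word U j @- y)
    = leaf_word T (\<sigma> j) @- y"
proof -
  have v: "nleaves T = nleaves U" "\<sigma> permutes {1..nleaves U}"
    using assms(2) by (auto simp: mem_valid)
  have \<sigma>: "1 \<le> \<sigma> k" "\<sigma> k \<le> nleaves T" "1 \<le> \<sigma> j" "\<sigma> j \<le> nleaves T" "\<sigma> j \<noteq> \<sigma> k"
    using permutes_in_interval[OF v(2)] permutes_inj[OF v(2)] assms(3-7) v(1) by (auto dest: injD)
  have "1 \<le> bstart d k j" "bstart d k j \<le> nleaves (attach d k U)"
    using block_of_bstart(3,4)[OF assms(1,3-6), of 0] nleaves_attach(1)[OF assms(1,3,4)] assms(1,7)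
    by auto
  then have "tree_act (attach d (\<sigma> k) T, sigma_ext d (nleaves U) \<sigma> k, attach d k U)
      (leaf_word (attach d k U) (bstart d k j) @- y)
    = leaf_word (attach d (\<sigma> k) T) (sigma_ext d (nleaves U) \<sigma> k (bstart d k j)) @- y"
    by (rule tree_act_leaf)
  then show ?thesis
    using leaf_word_attach_other[OF assms(1,3-7)] sigma_ext_bstart[OF assms(1,3-7)]
      leaf_word_attach_other[OF assms(1) \<sigma>] by simp
qed

lemma tree_act_expansion_caret:
  assumes "d \<ge> 1" "(T, \<sigma>, U) \<in> valid d" "1 \<le> k" "k \<le> nleaves U" "i < d"
  shows "tree_act (attach d (\<sigma> k) T, sigma_ext d (nleaves U) \<sigma> k, attach d k U)
      (leaf_word U k @- i ## y)
    = leaf_word T (\<sigma> k) @- i ## y"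
proof -
  have v: "nleaves T = nleaves U" "\<sigma> permutes {1..nleaves U}"
    using assms(2) by (auto simp: mem_valid)
  have \<sigma>: "1 \<le> \<sigma> k" "\<sigma> k \<le> nleaves T" using permutes_in_interval[OF v(2) assms(3,4)] v(1) by auto
  have "1 \<le> k + i" "k + i \<le> nleaves (attach d k U)"
    using assms(3-5) nleaves_attach(1)[OF assms(1,3,4)] by auto
  then have "tree_act (attach d (\<sigma> k) T, sigma_ext d (nleaves U) \<sigma> k, attach d k U)
      (leaf_word (attach d k U) (k + i) @- y)
    = leaf_word (attach d (\<sigma> k) T) (sigma_ext d (nleaves U) \<sigma> k (k + i)) @- y"
    by (rule tree_act_leaf)
  then show ?thesis
    using leaf_word_attach_same[OF assms(3-5)] sigma_ext_same[OF assms(1,3,4,5)]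
      leaf_word_attach_same[OF \<sigma> assms(5)] by simp
qed

lemma tree_act_expansion:
  assumes "d \<ge> 1" "(T, \<sigma>, U) \<in> valid d" "1 \<le> k" "k \<le> nleaves U" "x \<in> streams {..<d}"
  shows "tree_act (attach d (\<sigma> k) T, sigma_ext d (nleaves U) \<sigma> k, attach d k U) x
    = tree_act (T, \<sigma>, U) x"
proof -
  have "dary d U" using assms(2) by (auto simp: mem_valid)
  then obtain j y where j: "1 \<le> j" "j \<le> nleaves U" "y \<in> streams {..<d}" "x = leaf_word U j @- y"
    using leaf_word_shift_decomp assms(5) by blast
  show ?thesis
  proof (cases "j = k")
    case True
    have "shd y < d" using j(3) streams_shd by fastforce
    then show ?thesis
      using tree_act_expansion_caret[OF assms(1-4), of "shd y" "stl y"] tree_act_leaf[OF j(1,2)]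
        j(4) True
      by simp
  next
    case False
    then show ?thesis
      using tree_act_expansion_other_leaf[OF assms(1-4) j(1,2)] tree_act_leaf[OF j(1,2)] j(4)
        by simp
  qed
qed

definition same_act :: "nat \<Rightarrow> triple \<Rightarrow> triple \<Rightarrow> bool" where
  "same_act d r s \<longleftrightarrow> (\<forall>x\<in>streams {..<d}. tree_act r x = tree_act s x)"

lemma treq_imp_same_act:
  assumes "d \<ge> 1" "(r, s) \<in> treq d"
  shows "r \<in> valid d \<and> s \<in> valid d \<and> same_act d r s"
proof -
  define R where "R = {(r, s). r \<in> valid d \<and> s \<in> valid d \<and> same_act d r s}"
  have "expand d \<subseteq> R"
    using valid_expansion[OF assms(1)] tree_act_expansion[OF assms(1)]
    by (force simp: expand_def R_def same_act_def)
  moreover have "R\<inverse> = R" by (auto simp: R_def same_act_def)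
  ultimately have "expand d \<union> (expand d)\<inverse> \<subseteq> R" by blast
  moreover have "trans R" by (auto simp: trans_def R_def same_act_def)
  ultimately have "(expand d \<union> (expand d)\<inverse>)\<^sup>+ \<subseteq> R" using trancl_mono_subset trancl_id by metis
  then show ?thesis using assms(2) by (auto simp: treq_def R_def same_act_def)
qed

lemma treq_refl: "r \<in> valid d \<Longrightarrow> (r, r) \<in> treq d"
  unfolding treq_def by blast

lemma treq_sym: "(r, s) \<in> treq d \<Longrightarrow> (s, r) \<in> treq d"
proof -
  assume "(r, s) \<in> treq d"
  moreover have "sym ((expand d \<union> (expand d)\<inverse>)\<^sup>+)"
    by (rule sym_trancl) (auto simp: sym_def)
  ultimately show ?thesis unfolding treq_def by (auto dest: symD)
qed

lemma treq_trans: "(r, s) \<in> treq d \<Longrightarrow> (s, t) \<in> treq d \<Longrightarrow> (r, t) \<in> treq d"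
  unfolding treq_def by (auto intro: trancl_trans)

lemma treq_expand: "(r, s) \<in> treq d \<Longrightarrow> (s, t) \<in> expand d \<Longrightarrow> (r, t) \<in> treq d"
  using treq_trans[of r s d t] unfolding treq_def by blast

section \<open>Triples with the same action are equivalent\<close>

inductive tree_refines :: "nat \<Rightarrow> tree \<Rightarrow> tree \<Rightarrow> bool" for d U where
  tree_refines_refl: "tree_refines d U U"
| tree_refines_attach:
    "tree_refines d U U' \<Longrightarrow> 1 \<le> k \<Longrightarrow> k \<le> nleaves U' \<Longrightarrow> tree_refines d U (attach d k U')"

lemma tree_refines_trans: "tree_refines d B C \<Longrightarrow> tree_refines d A B \<Longrightarrow> tree_refines d A C"
  by (induction rule: tree_refines.induct) (auto intro: tree_refines.intros)

lemma tree_refines_treq: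
  assumes "d \<ge> 1" "(T, \<sigma>, U) \<in> valid d" "tree_refines d U U'"
  shows "\<exists>T' \<sigma>'. ((T, \<sigma>, U), (T', \<sigma>', U')) \<in> treq d \<and> (\<sigma> = id \<longrightarrow> \<sigma>' = id)"
  using assms(3)
proof (induction rule: tree_refines.induct)
  case tree_refines_refl
  then show ?case using treq_refl assms(2) by blast
next
  case (tree_refines_attach U' k)
  then obtain T' \<sigma>' where t: "((T, \<sigma>, U), (T', \<sigma>', U')) \<in> treq d" "\<sigma> = id \<longrightarrow> \<sigma>' = id"
    by blast
  have "(T', \<sigma>', U') \<in> valid d" using treq_imp_same_act[OF assms(1) t(1)] by blast
  then have "((T', \<sigma>', U'), (attach d (\<sigma>' k) T', sigma_ext d (nleaves U') \<sigma>' k, attach d k U'))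
    \<in> expand d"
    unfolding expand_def using tree_refines_attach.hyps by blast
  then show ?case
    using treq_expand[OF t(1)] t(2) sigma_ext_id[OF assms(1) tree_refines_attach.hyps(2,3)] by blast
qed

lemma attachs_append:
  "1 \<le> k \<Longrightarrow> k \<le> nleaves t \<Longrightarrow>
   attachs d (sum_list (map nleaves xs) + k) (xs @ t # ys) = xs @ attach d k t # ys"
proof (induction xs)
  case Nil
  then show ?case using attach_out_of_range(2)[of 0 ys d] by simp
next
  case (Cons x xs)
  have "attach d (nleaves x + sum_list (map nleaves xs) + k) x = x"
    using Cons.prems attach_out_of_range(1) by simp
  then show ?case using Cons by (simp add: add.assoc)
qed

lemma tree_refines_Node:
  assumes "tree_refines d t t'"
  shows "tree_refines d (Node (xs @ t # ys)) (Node (xs @ t' # ys))"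
  using assms
proof (induction rule: tree_refines.induct)
  case (tree_refines_attach U' k)
  have "attach d (sum_list (map nleaves xs) + k) (Node (xs @ U' # ys))
    = Node (xs @ attach d k U' # ys)"
    using attachs_append[OF tree_refines_attach.hyps(2,3)] by simp
  moreover have "1 \<le> sum_list (map nleaves xs) + k"
    "sum_list (map nleaves xs) + k \<le> nleaves (Node (xs @ U' # ys))"
    using tree_refines_attach.hyps by auto
  ultimately show ?case using tree_refines.tree_refines_attach[OF tree_refines_attach.IH] by metis
qed (rule tree_refines.tree_refines_refl)

lemma tree_refines_Node_list:
  assumes "list_all2 (tree_refines d) ts ts'"
  shows "tree_refines d (Node (xs @ ts)) (Node (xs @ ts'))"
  using assms
proof (induction ts ts' arbitrary: xs rule: list_all2_induct)
  case (Cons t ts t' ts')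
  have "tree_refines d (Node (xs @ t # ts)) (Node (xs @ t' # ts))"
    by (rule tree_refines_Node[OF Cons.hyps(1)])
  moreover have "tree_refines d (Node ((xs @ [t']) @ ts)) (Node ((xs @ [t']) @ ts'))"
    by (rule Cons.IH)
  ultimately show ?case using tree_refines_trans by simp
qed (rule tree_refines.tree_refines_refl)

fun full_tree :: "nat \<Rightarrow> nat \<Rightarrow> tree" where
  "full_tree d 0 = Leaf"
| "full_tree d (Suc m) = Node (replicate d (full_tree d m))"

fun depth :: "tree \<Rightarrow> nat" where
  "depth Leaf = 0"
| "depth (Node ts) = Suc (sum_list (map depth ts))"

lemma tree_refines_Leaf_full_tree: "tree_refines d Leaf (full_tree d m)"
proof (induction m)
  case (Suc m)
  have "list_all2 (tree_refines d) (replicate d Leaf) (replicate d (full_tree d m))"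
    using Suc by (simp add: list_all2_conv_all_nth)
  then have "tree_refines d (Node (replicate d Leaf)) (full_tree d (Suc m))"
    using tree_refines_Node_list[of d _ _ "[]"] by simp
  moreover have "tree_refines d Leaf (Node (replicate d Leaf))"
    using tree_refines.tree_refines_attach[OF tree_refines.tree_refines_refl, of 1 Leaf] by simp
  ultimately show ?case by (rule tree_refines_trans)
qed (simp add: tree_refines.tree_refines_refl)

lemma tree_refines_full_tree: "dary d U \<Longrightarrow> depth U \<le> m \<Longrightarrow> tree_refines d U (full_tree d m)"
proof (induction U arbitrary: m)
  case Leaf
  then show ?case by (simp add: tree_refines_Leaf_full_tree)
next
  case (Node ts)
  obtain m' where m: "m = Suc m'" using Node.prems by (cases m) auto
  have "tree_refines d t (full_tree d m')" if "t \<in> set ts" for t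
  proof -
    have "depth t \<le> sum_list (map depth ts)" using that by (auto intro!: member_le_sum_list)
    then show ?thesis using Node.IH[OF that] Node.prems that m by auto
  qed
  then have "list_all2 (tree_refines d) ts (replicate d (full_tree d m'))"
    using Node.prems by (auto simp: list_all2_conv_all_nth)
  then show ?case using tree_refines_Node_list[of d _ _ "[]"] m by simp
qed

lemma shift_eq_on_streams_imp_eq:
  fixes p q :: "nat list"
  assumes "d \<ge> 2" "\<forall>y\<in>streams {..<d}. p @- y = q @- y"
  shows "p = q"
proof -
  have shorter: False if "length u < length v"
    "\<forall>y\<in>streams {..<d}. u @- y = v @- y" for u v :: "nat list"
  proof -
    define c where "c = (if v ! length u = 0 then 1 else 0 :: nat)"
    have "sconst c \<in> streams {..<d}" using assms(1) by (auto simp: c_def intro!: sconst_streams)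
    then have "(u @- sconst c) !! length u = (v @- sconst c) !! length u" using that(2) by simp
    then show False using that(1) by (simp add: c_def split: if_splits)
  qed
  have "length p = length q"
    using shorter[of p q] shorter[of q p] assms(2) by (metis linorder_neqE_nat)
  moreover have "p @- sconst 0 = q @- sconst 0"
    using assms sconst_streams[of 0 "{..<d}"] by simp
  then have "stake (length p) (p @- sconst 0) = stake (length p) (q @- sconst 0)" by simp
  ultimately show ?thesis by (simp add: stake_shift)
qed

lemma set_leaf_words_subset:
  assumes n: "nleaves A = n" "nleaves B = n" and \<pi>: "\<pi> permutes {1..n}" "\<pi>' permutes {1..n}"
    and w: "\<And>k. 1 \<le> k \<Longrightarrow> k \<le> n \<Longrightarrow> leaf_word A (\<pi> k) = leaf_word B (\<pi>' k)"
  shows "set (leaf_words A) \<subseteq> set (leaf_words B)"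
proof
  fix p assume "p \<in> set (leaf_words A)"
  then obtain j where j: "1 \<le> j" "j \<le> n" "p = leaf_word A j"
    using n(1) by (auto simp: in_leaf_words_iff)
  let ?k = "inv_into UNIV \<pi> j"
  have k: "?k \<in> {1..n}" using permutes_in_image[OF permutes_inv[OF \<pi>(1)]] j by simp
  have "p = leaf_word A (\<pi> ?k)" using permutes_inverses(1)[OF \<pi>(1)] j(3) by simp
  also have "\<dots> = leaf_word B (\<pi>' ?k)" using w k by simp
  finally show "p \<in> set (leaf_words B)"
    using leaf_word_in_set permutes_in_interval[OF \<pi>(2)] k n(2) by auto
qed

lemma same_act_same_domain:
  assumes d: "d \<ge> 2" and v: "(T, \<sigma>, U) \<in> valid d" "(T', \<sigma>', U) \<in> valid d"
    and s: "same_act d (T, \<sigma>, U) (T', \<sigma>', U)"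
  shows "T = T' \<and> \<sigma> = \<sigma>'"
proof -
  have vv: "dary d T" "dary d U" "nleaves T = nleaves U" "\<sigma> permutes {1..nleaves U}"
           "dary d T'" "nleaves T' = nleaves U" "\<sigma>' permutes {1..nleaves U}"
    using v by (auto simp: mem_valid)
  let ?n = "nleaves U"
  have same_word: "leaf_word T (\<sigma> k) = leaf_word T' (\<sigma>' k)" if k: "1 \<le> k" "k \<le> ?n" for k
  proof -
    have "leaf_word T (\<sigma> k) @- y = leaf_word T' (\<sigma>' k) @- y" if y: "y \<in> streams {..<d}" for y
    proof -
      have "leaf_word U k @- y \<in> streams {..<d}"
        using shift_streams[OF leaf_word_in_lists[OF vv(2) k] y] .
      then have "tree_act (T, \<sigma>, U) (leaf_word U k @- y)
        = tree_act (T', \<sigma>', U) (leaf_word U k @- y)"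
        using s by (simp add: same_act_def)
      then show ?thesis by (simp add: tree_act_leaf[OF k])
    qed
    then show ?thesis using shift_eq_on_streams_imp_eq[OF d] by blast
  qed
  have "set (leaf_words T) \<subseteq> set (leaf_words T')"
    by (rule set_leaf_words_subset[of T _ T' \<sigma> \<sigma>']) (use vv same_word in auto)
  moreover have "set (leaf_words T') \<subseteq> set (leaf_words T)"
    by (rule set_leaf_words_subset[of T' _ T \<sigma>' \<sigma>]) (use vv same_word in auto)
  ultimately have T: "T = T'" using dary_eqI_leaf_words[OF vv(1,5)] by blast
  have "\<sigma> k = \<sigma>' k" for k
  proof (cases "k \<in> {1..?n}")
    case True
    then have "1 \<le> \<sigma> k" "\<sigma> k \<le> nleaves T" "1 \<le> \<sigma>' k" "\<sigma>' k \<le> nleaves T"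
      using permutes_in_interval[OF vv(4)] permutes_in_interval[OF vv(7)] vv(3) by auto
    then show ?thesis using leaf_word_inj same_word True T by auto
  next
    case False
    then show ?thesis using vv(4,7) by (simp add: permutes_def)
  qed
  then show ?thesis using T by auto
qed

lemma same_act_imp_treq:
  assumes d: "d \<ge> 2" and v: "r \<in> valid d" "r' \<in> valid d" and s: "same_act d r r'"
  shows "(r, r') \<in> treq d"
proof -
  obtain T \<sigma> U T' \<sigma>' U' where r: "r = (T, \<sigma>, U)" "r' = (T', \<sigma>', U')" by (cases r, cases r')
  have "dary d U" "dary d U'" using v r by (auto simp: mem_valid)
  let ?m = "depth U + depth U'"
  have d1: "d \<ge> 1" using d by simp
  obtain T1 \<sigma>1 where t1: "(r, (T1, \<sigma>1, full_tree d ?m)) \<in> treq d"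
    using tree_refines_treq[OF d1 _ tree_refines_full_tree[OF \<open>dary d U\<close>, of ?m]] v r by force
  obtain T2 \<sigma>2 where t2: "(r', (T2, \<sigma>2, full_tree d ?m)) \<in> treq d"
    using tree_refines_treq[OF d1 _ tree_refines_full_tree[OF \<open>dary d U'\<close>, of ?m]] v r by force
  have a1: "(T1, \<sigma>1, full_tree d ?m) \<in> valid d" "same_act d r (T1, \<sigma>1, full_tree d ?m)"
    using treq_imp_same_act[OF d1 t1] by auto
  have a2: "(T2, \<sigma>2, full_tree d ?m) \<in> valid d" "same_act d r' (T2, \<sigma>2, full_tree d ?m)"
    using treq_imp_same_act[OF d1 t2] by auto
  have "same_act d (T1, \<sigma>1, full_tree d ?m) (T2, \<sigma>2, full_tree d ?m)"
    using a1(2) a2(2) s by (simp add: same_act_def)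
  then have "T1 = T2 \<and> \<sigma>1 = \<sigma>2" using same_act_same_domain[OF d a1(1) a2(1)] by blast
  then show ?thesis using t1 t2 treq_sym treq_trans by metis
qed

lemma treq_iff_same_act:
  "d \<ge> 2 \<Longrightarrow> (r, r') \<in> treq d \<longleftrightarrow> r \<in> valid d \<and> r' \<in> valid d \<and> same_act d r r'"
  using treq_imp_same_act[of d r r'] same_act_imp_treq[of d r r'] by auto

fun graft :: "nat \<Rightarrow> nat list \<Rightarrow> tree \<Rightarrow> tree" where
  "graft d [] S = S"
| "graft d (a # q) S = Node (map (\<lambda>j. if j = a then graft d q S else Leaf) [0..<d])"

fun graft_left :: "nat list \<Rightarrow> nat list list" where
  "graft_left [] = []"
| "graft_left (a # q) = map (\<lambda>j. [j]) [0..<a] @ map (Cons a) (graft_left q)"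

fun graft_right :: "nat \<Rightarrow> nat list \<Rightarrow> nat list list" where
  "graft_right d [] = []"
| "graft_right d (a # q) = map (Cons a) (graft_right d q) @ map (\<lambda>j. [j]) [Suc a..<d]"

lemma leaf_words_from_map_upt:
  "leaf_words_from i (map g [i..<i + m])
    = concat (map (\<lambda>j. map (Cons j) (leaf_words (g j))) [i..<i + m])"
proof (induction m arbitrary: i)
  case (Suc m)
  have "[i..<i + Suc m] = i # [Suc i..<Suc i + m]" by (simp add: upt_rec)
  then show ?case using Suc[of "Suc i"] by simp
qed simp

lemma leaf_words_graft:
  "q \<in> lists {..<d} \<Longrightarrow>
   leaf_words (graft d q S) = graft_left q @ map (\<lambda>p. q @ p) (leaf_words S) @ graft_right d q"
proof (induction q)
  case (Cons a q)
  let ?g = "\<lambda>j. if j = a then graft d q S else Leaf"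
  let ?w = "\<lambda>j. map (Cons j) (leaf_words (?g j))"
  have a: "a < d" using Cons.prems by simp
  have "[0..<d] = [0..<a] @ a # [Suc a..<d]"
    using a upt_add_eq_append[of 0 a "d - a"] upt_conv_Cons[of a d] by simp
  then have "leaf_words (graft d (a # q) S)
      = concat (map ?w [0..<a]) @ map (Cons a) (leaf_words (graft d q S))
        @ concat (map ?w [Suc a..<d])"
    using leaf_words_from_map_upt[of 0 ?g d] by simp
  moreover have "map ?w [0..<a] = map (\<lambda>j. [[j]]) [0..<a]"
    "map ?w [Suc a..<d] = map (\<lambda>j. [[j]]) [Suc a..<d]"
    by auto
  ultimately show ?case using Cons by (simp add: concat_map_singleton)
qed (simp add: map_idI)

lemma dary_graft: "q \<in> lists {..<d} \<Longrightarrow> dary d S \<Longrightarrow> dary d (graft d q S)"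
  by (induction q) auto

lemma nleaves_graft:
  "q \<in> lists {..<d}
    \<Longrightarrow> nleaves (graft d q S) = length (graft_left q) + nleaves S + length (graft_right d q)"
  using leaf_words_graft[of q d S] length_leaf_words(1)[of "graft d q S"] length_leaf_words(1)[of S]
  by simp

lemma leaf_word_graft_inside:
  assumes "q \<in> lists {..<d}" "1 \<le> i" "i \<le> nleaves S"
  shows "leaf_word (graft d q S) (length (graft_left q) + i) = q @ leaf_word S i"
proof -
  have "length (graft_left q) + i - 1 = length (graft_left q) + (i - 1)"
    "i - 1 < length (leaf_words S)"
    using assms by (auto simp: length_leaf_words)
  then show ?thesis using leaf_words_graft[OF assms(1)] by (simp add: leaf_word_def nth_append)
qed

lemma leaf_word_graft_outside:
  assumes "q \<in> lists {..<d}" "nleaves A = nleaves B" "1 \<le> j"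
    "j \<le> length (graft_left q) \<or> length (graft_left q) + nleaves B < j"
  shows "leaf_word (graft d q A) j = leaf_word (graft d q B) j"
  using assms leaf_words_graft[OF assms(1), of A] leaf_words_graft[OF assms(1), of B]
  by (auto simp: leaf_word_def nth_append length_leaf_words)

lemma tree_act_graft_outside:
  assumes q: "q \<in> lists {..<d}" and "dary d A" "dary d B" "nleaves A = nleaves B"
    and x: "x \<in> streams {..<d}" "x \<notin> cone q"
  shows "tree_act (graft d q A, id, graft d q B) x = x"
proof -
  obtain j y where j: "1 \<le> j" "j \<le> nleaves (graft d q B)" "x = leaf_word (graft d q B) j @- y"
    using leaf_word_shift_decomp[OF dary_graft[OF q assms(3)] x(1)] by blast
  have "j \<le> length (graft_left q) \<or> length (graft_left q) + nleaves B < j"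
  proof (rule ccontr)
    assume "\<not> ?thesis"
    moreover define i where "i = j - length (graft_left q)"
    ultimately have "1 \<le> i" "i \<le> nleaves B" "j = length (graft_left q) + i" by auto
    then have "x = q @- leaf_word B i @- y" using leaf_word_graft_inside[OF q] j(3) by simp
    then show False using x(2) by simp
  qed
  then show ?thesis
    using leaf_word_graft_outside[OF q assms(4) j(1)] tree_act_leaf[OF j(1,2)] j(3) by simp
qed

lemma tree_act_graft_inside:
  assumes q: "q \<in> lists {..<d}" and "dary d B" "nleaves A = nleaves B" and z: "z \<in> streams {..<d}"
  shows "tree_act (graft d q A, id, graft d q B) (q @- z) = q @- tree_act (A, id, B) z"
proof -
  obtain i y where i: "1 \<le> i" "i \<le> nleaves B" "z = leaf_word B i @- y"
    using leaf_word_shift_decomp[OF assms(2) z] by blast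
  have r: "1 \<le> length (graft_left q) + i" "length (graft_left q) + i \<le> nleaves (graft d q B)"
    using i nleaves_graft[OF q] by auto
  have "q @- z = leaf_word (graft d q B) (length (graft_left q) + i) @- y"
    using leaf_word_graft_inside[OF q i(1,2)] i(3) by simp
  then have "tree_act (graft d q A, id, graft d q B) (q @- z)
      = leaf_word (graft d q A) (length (graft_left q) + i) @- y"
    using tree_act_leaf[OF r] by simp
  also have "\<dots> = q @- leaf_word A i @- y"
    using leaf_word_graft_inside[OF q, of i A] i assms(3) by simp
  also have "\<dots> = q @- tree_act (A, id, B) z" using tree_act_leaf[OF i(1,2)] i(3) by simp
  finally show ?thesis .
qed

text \<open>\<open>(x0_range d, id, x0_domain d)\<close> is the generator \<open>x\<^sub>0\<close> of \<open>F d\<close>.\<close>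

definition x0_domain :: "nat \<Rightarrow> tree" where
  "x0_domain d = Node (replicate (d - 1) Leaf @ [Node (replicate d Leaf)])"

definition x0_range :: "nat \<Rightarrow> tree" where
  "x0_range d = Node (Node (replicate d Leaf) # replicate (d - 1) Leaf)"

lemma leaf_words_x0_domain:
  "d \<ge> 1 \<Longrightarrow> leaf_words (x0_domain d) = map (\<lambda>j. [j]) [0..<d - 1] @ map (\<lambda>j. [d - 1, j]) [0..<d]"
  by (simp add: x0_domain_def leaf_words_from_append leaf_words_from_replicate_Leaf)

lemma leaf_words_x0_range:
  "d \<ge> 1 \<Longrightarrow> leaf_words (x0_range d) = map (\<lambda>j. [0, j]) [0..<d] @ map (\<lambda>j. [j]) [1..<d]"
  by (simp add: x0_range_def leaf_words_from_replicate_Leaf)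

lemma x0_valid: "d \<ge> 1 \<Longrightarrow> (x0_range d, id, x0_domain d) \<in> valid d"
  using length_leaf_words(1)[of "x0_range d"] length_leaf_words(1)[of "x0_domain d"]
  by (auto simp: mem_valid x0_range_def x0_domain_def leaf_words_x0_domain leaf_words_x0_range
    permutes_id)

lemma tree_act_x0:
  assumes "d \<ge> 2"
  shows "tree_act (x0_range d, id, x0_domain d) ([0] @- z) = [0, 0] @- z"
    "tree_act (x0_range d, id, x0_domain d) ([d - 1, d - 1] @- z) = [d - 1] @- z"
proof -
  have n: "nleaves (x0_domain d) = 2 * d - 1"
    using length_leaf_words(1)[of "x0_domain d"] leaf_words_x0_domain assms by simp
  have "leaf_word (x0_domain d) 1 = [0]" "leaf_word (x0_range d) 1 = [0, 0]"
    "leaf_word (x0_domain d) (2 * d - 1) = [d - 1, d - 1]"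
    "leaf_word (x0_range d) (2 * d - 1) = [d - 1]"
    using assms by (auto simp: leaf_word_def leaf_words_x0_domain leaf_words_x0_range nth_append)
  moreover have "1 \<le> 2 * d - 1" "2 * d - 1 \<le> nleaves (x0_domain d)" using assms n by auto
  ultimately show "tree_act (x0_range d, id, x0_domain d) ([0] @- z) = [0, 0] @- z"
    "tree_act (x0_range d, id, x0_domain d) ([d - 1, d - 1] @- z) = [d - 1] @- z"
    using tree_act_leaf[of 1 "x0_domain d" "x0_range d" id z]
      tree_act_leaf[of "2 * d - 1" "x0_domain d" "x0_range d" id z]
    by simp_all
qed

lemma graft_x0_valid:
  assumes "d \<ge> 1" "q \<in> lists {..<d}"
  shows "(graft d q (x0_range d), id, graft d q (x0_domain d)) \<in> valid d"
  using x0_valid[OF assms(1)] dary_graft[OF assms(2)] nleaves_graft[OF assms(2)]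
  by (simp add: mem_valid permutes_id)

definition x0_at :: "nat \<Rightarrow> nat list \<Rightarrow> triple set" where
  "x0_at d q = cls d (graft d q (x0_range d), id, graft d q (x0_domain d))"

text \<open>\<open>x0_at d q\<close> moves the cone of \<open>q @ [d - 1, 0]\<close> onto that of \<open>q @ [0, d - 1]\<close>, so the
  two copies of \<open>x\<^sub>0\<close> below do not commute.\<close>

definition commutator_at :: "nat \<Rightarrow> nat list \<Rightarrow> triple set" where
  "commutator_at d q = x0_at d q \<otimes>\<^bsub>V d\<^esub> x0_at d (q @ [d - 1, 0])
     \<otimes>\<^bsub>V d\<^esub> inv\<^bsub>V d\<^esub> (x0_at d q) \<otimes>\<^bsub>V d\<^esub> inv\<^bsub>V d\<^esub> (x0_at d (q @ [d - 1, 0]))"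

section \<open>The group \<open>V d\<close>\<close>

definition inverse_triple :: "triple \<Rightarrow> triple" where
  "inverse_triple r = (case r of (T, \<sigma>, U) \<Rightarrow> (U, inv_into UNIV \<sigma>, T))"

lemma inverse_triple_valid: "r \<in> valid d \<Longrightarrow> inverse_triple r \<in> valid d"
  by (cases r) (auto simp: inverse_triple_def mem_valid permutes_inv)

lemma tree_act_inverse_triple:
  assumes "r \<in> valid d" "x \<in> streams {..<d}"
  shows "tree_act (inverse_triple r) (tree_act r x) = x"
proof -
  obtain T \<sigma> U where r: "r = (T, \<sigma>, U)" by (cases r)
  then have v: "dary d U" "nleaves T = nleaves U" "\<sigma> permutes {1..nleaves U}"
    using assms(1) by (auto simp: mem_valid)
  obtain k y where k: "1 \<le> k" "k \<le> nleaves U" "x = leaf_word U k @- y"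
    using leaf_word_shift_decomp[OF v(1) assms(2)] by blast
  have "1 \<le> \<sigma> k" "\<sigma> k \<le> nleaves T" using permutes_in_interval[OF v(3) k(1,2)] v(2) by auto
  then show ?thesis
    using r k tree_act_leaf[OF k(1,2)] tree_act_leaf[of "\<sigma> k" T U "inv_into UNIV \<sigma>" y]
      permutes_inverses(2)[OF v(3)]
    by (simp add: inverse_triple_def)
qed

lemma valid_compose: "(T, \<sigma>, U) \<in> valid d \<Longrightarrow> (U, \<tau>, W) \<in> valid d \<Longrightarrow> (T, \<sigma> \<circ> \<tau>, W) \<in> valid d"
  by (auto simp: mem_valid intro: permutes_compose)

lemma tree_act_compose:
  assumes "(U, \<tau>, W) \<in> valid d" "x \<in> streams {..<d}"
  shows "tree_act (T, \<sigma> \<circ> \<tau>, W) x = tree_act (T, \<sigma>, U) (tree_act (U, \<tau>, W) x)"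
proof -
  have v: "dary d W" "nleaves U = nleaves W" "\<tau> permutes {1..nleaves W}"
    using assms(1) by (auto simp: mem_valid)
  obtain k y where k: "1 \<le> k" "k \<le> nleaves W" "x = leaf_word W k @- y"
    using leaf_word_shift_decomp[OF v(1) assms(2)] by blast
  have "1 \<le> \<tau> k" "\<tau> k \<le> nleaves U" using permutes_in_interval[OF v(3) k(1,2)] v(2) by auto
  then show ?thesis using tree_act_leaf[OF k(1,2)] tree_act_leaf k(3) by simp
qed

lemma valid_one: "(Leaf, id, Leaf) \<in> valid d"
  by (simp add: mem_valid permutes_id)

lemma tree_act_one: "tree_act (Leaf, id, Leaf) x = x"
  using tree_act_leaf[of 1 Leaf Leaf id x] by (simp add: leaf_word_def)

lemma carrier_V_iff: "a \<in> carrier (V d) \<longleftrightarrow> (\<exists>r\<in>valid d. a = cls d r)"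
  by (auto simp: V_def quotient_def cls_def)

lemma mult_V: "a \<otimes>\<^bsub>V d\<^esub> b = vmult d a b"
  by (simp add: V_def)

lemma one_V: "\<one>\<^bsub>V d\<^esub> = cls d (Leaf, id, Leaf)"
  by (simp add: V_def)

definition vact :: "triple set \<Rightarrow> nat stream \<Rightarrow> nat stream" where
  "vact a = tree_act (SOME r. r \<in> a)"

context
  fixes d :: nat
  assumes d2: "d \<ge> 2"
begin

lemma mem_cls_iff: "r \<in> valid d \<Longrightarrow> s \<in> cls d r \<longleftrightarrow> s \<in> valid d \<and> same_act d r s"
  unfolding cls_def using treq_iff_same_act[OF d2] by auto

lemma self_in_cls: "r \<in> valid d \<Longrightarrow> r \<in> cls d r"
  using mem_cls_iff by (simp add: same_act_def)

lemma cls_eq_iff: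
  assumes "r \<in> valid d" "s \<in> valid d"
  shows "cls d r = cls d s \<longleftrightarrow> same_act d r s"
proof
  assume "cls d r = cls d s"
  then show "same_act d r s" using mem_cls_iff[OF assms(1)] self_in_cls[OF assms(2)] by auto
next
  assume "same_act d r s"
  then show "cls d r = cls d s"
    using mem_cls_iff[OF assms(1)] mem_cls_iff[OF assms(2)] by (auto simp: same_act_def)
qed

lemma cls_in_carrier: "r \<in> valid d \<Longrightarrow> cls d r \<in> carrier (V d)"
  using carrier_V_iff by blast

lemma vact_cls:
  assumes "r \<in> valid d" "x \<in> streams {..<d}"
  shows "vact (cls d r) x = tree_act r x"
proof -
  have "(SOME s. s \<in> cls d r) \<in> cls d r" using self_in_cls[OF assms(1)] by (rule someI)
  then show ?thesis using mem_cls_iff[OF assms(1)] assms(2) by (simp add: vact_def same_act_def)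
qed

lemma vact_in_streams: "a \<in> carrier (V d) \<Longrightarrow> x \<in> streams {..<d} \<Longrightarrow> vact a x \<in> streams {..<d}"
  using vact_cls tree_act_in_streams by (auto simp: carrier_V_iff)

lemma V_eqI:
  assumes "a \<in> carrier (V d)" "b \<in> carrier (V d)" "\<And>x. x \<in> streams {..<d} \<Longrightarrow> vact a x = vact b x"
  shows "a = b"
proof -
  obtain r s where "r \<in> valid d" "a = cls d r" "s \<in> valid d" "b = cls d s"
    using assms(1,2) by (auto simp: carrier_V_iff)
  then show ?thesis using assms(3) cls_eq_iff vact_cls by (simp add: same_act_def)
qed

lemma same_act_inverse_triple:
  assumes "r \<in> valid d" "s \<in> valid d" "same_act d (inverse_triple r) s"
  shows "same_act d r (inverse_triple s)"
  unfolding same_act_def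
proof
  fix x assume x: "x \<in> streams {..<d}"
  have y: "tree_act r x \<in> streams {..<d}" using tree_act_in_streams assms(1) x by blast
  have "tree_act s (tree_act r x) = x"
    using assms(3) y tree_act_inverse_triple[OF assms(1) x] by (simp add: same_act_def)
  then show "tree_act r x = tree_act (inverse_triple s) x"
    using tree_act_inverse_triple[OF assms(2) y] by simp
qed

text \<open>Expand both middle trees to the same full tree; expansion keeps a trivial permutation
  trivial.\<close>

lemma common_middle:
  assumes "r \<in> valid d" "s \<in> valid d"
  shows "\<exists>T \<sigma> U \<tau> W. (T, \<sigma>, U) \<in> cls d r \<and> (U, \<tau>, W) \<in> cls d s
     \<and> ((\<exists>A B. r = (A, id, B)) \<longrightarrow> \<sigma> = id) \<and> ((\<exists>A B. s = (A, id, B)) \<longrightarrow> \<tau> = id)"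
proof -
  obtain T0 \<sigma>0 U0 U1 \<tau>1 W1 where r: "r = (T0, \<sigma>0, U0)" and s: "s = (U1, \<tau>1, W1)"
    by (cases r, cases s)
  have "dary d U0" "dary d U1" using assms r s by (auto simp: mem_valid)
  let ?m = "depth U0 + depth U1"
  have d1: "d \<ge> 1" using d2 by simp
  obtain T \<sigma> where t1: "(r, (T, \<sigma>, full_tree d ?m)) \<in> treq d" "\<sigma>0 = id \<longrightarrow> \<sigma> = id"
    using tree_refines_treq[OF d1 _ tree_refines_full_tree[OF \<open>dary d U0\<close>, of ?m]] assms r by force
  have s': "inverse_triple s \<in> valid d" "inverse_triple s = (W1, inv_into UNIV \<tau>1, U1)"
    using inverse_triple_valid assms(2) s by (auto simp: inverse_triple_def)
  obtain W \<tau> where t2: "(inverse_triple s, (W, \<tau>, full_tree d ?m)) \<in> treq d"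
      "inv_into UNIV \<tau>1 = id \<longrightarrow> \<tau> = id"
    using tree_refines_treq[OF d1 _ tree_refines_full_tree[OF \<open>dary d U1\<close>, of ?m]] s' by force
  have v2: "(W, \<tau>, full_tree d ?m) \<in> valid d" "same_act d (inverse_triple s) (W, \<tau>, full_tree d ?m)"
    using treq_imp_same_act[OF d1 t2(1)] by auto
  have "(full_tree d ?m, inv_into UNIV \<tau>, W) \<in> cls d s"
    using same_act_inverse_triple[OF assms(2) v2] inverse_triple_valid[OF v2(1)] mem_cls_iff
      assms(2)
    by (simp add: inverse_triple_def)
  moreover have "(T, \<sigma>, full_tree d ?m) \<in> cls d r" using t1(1) by (simp add: cls_def)
  moreover have "\<tau>1 = id \<Longrightarrow> inv_into UNIV \<tau> = id" using t2(2) by (simp add: inv_id)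
  ultimately show ?thesis using t1(2) r s by blast
qed

lemma vmult_cls:
  assumes "r \<in> valid d" "s \<in> valid d"
  shows "\<exists>t\<in>valid d. vmult d (cls d r) (cls d s) = cls d t
     \<and> (\<forall>x\<in>streams {..<d}. tree_act t x = tree_act r (tree_act s x))
     \<and> ((\<exists>A B. r = (A, id, B)) \<longrightarrow> (\<exists>A B. s = (A, id, B)) \<longrightarrow> (\<exists>A B. t = (A, id, B)))"
proof -
  obtain T \<sigma> U \<tau> W where m: "(T, \<sigma>, U) \<in> cls d r" "(U, \<tau>, W) \<in> cls d s"
     "(\<exists>A B. r = (A, id, B)) \<longrightarrow> \<sigma> = id" "(\<exists>A B. s = (A, id, B)) \<longrightarrow> \<tau> = id"
    using common_middle[OF assms] by blast
  have composite: "(T', \<sigma>' \<circ> \<tau>', W') \<in> valid d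
      \<and> (\<forall>x\<in>streams {..<d}. tree_act (T', \<sigma>' \<circ> \<tau>', W') x = tree_act r (tree_act s x))"
    if "(T', \<sigma>', U') \<in> cls d r" "(U', \<tau>', W') \<in> cls d s" for T' \<sigma>' U' \<tau>' W'
  proof -
    have v: "(T', \<sigma>', U') \<in> valid d" "same_act d r (T', \<sigma>', U')"
            "(U', \<tau>', W') \<in> valid d" "same_act d s (U', \<tau>', W')"
      using that mem_cls_iff assms by auto
    have "tree_act (T', \<sigma>' \<circ> \<tau>', W') x = tree_act r (tree_act s x)" if x: "x \<in> streams {..<d}" for x
    proof -
      have "tree_act s x \<in> streams {..<d}" using assms(2) tree_act_in_streams x by blast
      then show ?thesis using tree_act_compose[OF v(3) x] v(2,4) x by (simp add: same_act_def)
    qed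
    then show ?thesis using valid_compose[OF v(1,3)] by simp
  qed
  let ?t = "(T, \<sigma> \<circ> \<tau>, W)"
  have "vmult d (cls d r) (cls d s) = cls d ?t"
    unfolding vmult_def
  proof (rule the_equality)
    fix c assume "\<exists>T' \<sigma>' U' \<tau>' W'. (T', \<sigma>', U') \<in> cls d r \<and> (U', \<tau>', W') \<in> cls d s
      \<and> c = cls d (T', \<sigma>' \<circ> \<tau>', W')"
    then obtain T' \<sigma>' U' \<tau>' W' where c: "(T', \<sigma>', U') \<in> cls d r" "(U', \<tau>', W') \<in> cls d s"
      "c = cls d (T', \<sigma>' \<circ> \<tau>', W')"
      by blast
    show "c = cls d ?t"
      using c(3) cls_eq_iff composite[OF c(1,2)] composite[OF m(1,2)] by (simp add: same_act_def)
  qed (use m in blast)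
  then show ?thesis using composite[OF m(1,2)] m(3,4) by auto
qed

lemma mult_V_cls:
  assumes "r \<in> valid d" "s \<in> valid d"
  shows "\<exists>t\<in>valid d. cls d r \<otimes>\<^bsub>V d\<^esub> cls d s = cls d t
    \<and> (\<forall>x\<in>streams {..<d}. tree_act t x = tree_act r (tree_act s x))"
  using vmult_cls[OF assms] by (auto simp: mult_V)

lemma mult_V_closed:
  assumes "a \<in> carrier (V d)" "b \<in> carrier (V d)"
  shows "a \<otimes>\<^bsub>V d\<^esub> b \<in> carrier (V d)"
proof -
  obtain r s where "r \<in> valid d" "a = cls d r" "s \<in> valid d" "b = cls d s"
    using assms by (auto simp: carrier_V_iff)
  then obtain t where "t \<in> valid d" "a \<otimes>\<^bsub>V d\<^esub> b = cls d t" using mult_V_cls[of r s] by blast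
  then show ?thesis using cls_in_carrier by simp
qed

lemma vact_mult:
  assumes "a \<in> carrier (V d)" "b \<in> carrier (V d)" "x \<in> streams {..<d}"
  shows "vact (a \<otimes>\<^bsub>V d\<^esub> b) x = vact a (vact b x)"
proof -
  obtain r s where r: "r \<in> valid d" "a = cls d r" and s: "s \<in> valid d" "b = cls d s"
    using assms(1,2) by (auto simp: carrier_V_iff)
  obtain t where t: "t \<in> valid d" "a \<otimes>\<^bsub>V d\<^esub> b = cls d t"
    "\<forall>x\<in>streams {..<d}. tree_act t x = tree_act r (tree_act s x)"
    using mult_V_cls[OF r(1) s(1)] r(2) s(2) by blast
  show ?thesis
    using t r s assms(3) vact_cls tree_act_in_streams by simp
qed

lemma vact_one: "x \<in> streams {..<d} \<Longrightarrow> vact \<one>\<^bsub>V d\<^esub> x = x"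
  using vact_cls[OF valid_one] tree_act_one by (simp add: one_V)

lemma one_in_carrier_V: "\<one>\<^bsub>V d\<^esub> \<in> carrier (V d)"
  using cls_in_carrier valid_one by (simp add: one_V)

lemma inverse_triple_mult_V:
  assumes "r \<in> valid d"
  shows "cls d (inverse_triple r) \<otimes>\<^bsub>V d\<^esub> cls d r = \<one>\<^bsub>V d\<^esub>"
proof (rule V_eqI)
  have r': "inverse_triple r \<in> valid d" by (rule inverse_triple_valid[OF assms])
  then show "cls d (inverse_triple r) \<otimes>\<^bsub>V d\<^esub> cls d r \<in> carrier (V d)"
    using mult_V_closed cls_in_carrier assms by blast
  fix x assume x: "x \<in> streams {..<d}"
  then show "vact (cls d (inverse_triple r) \<otimes>\<^bsub>V d\<^esub> cls d r) x = vact \<one>\<^bsub>V d\<^esub> x"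
    using vact_mult[OF cls_in_carrier[OF r'] cls_in_carrier[OF assms] x] vact_cls r' assms
      tree_act_in_streams tree_act_inverse_triple vact_one
    by simp
qed (rule one_in_carrier_V)

lemma group_V: "group (V d)"
proof (rule groupI)
  fix x y z assume xyz: "x \<in> carrier (V d)" "y \<in> carrier (V d)" "z \<in> carrier (V d)"
  show "x \<otimes>\<^bsub>V d\<^esub> y \<otimes>\<^bsub>V d\<^esub> z = x \<otimes>\<^bsub>V d\<^esub> (y \<otimes>\<^bsub>V d\<^esub> z)"
    using xyz by (intro V_eqI) (simp_all add: mult_V_closed vact_mult vact_in_streams)
next
  fix x assume x: "x \<in> carrier (V d)"
  show "\<one>\<^bsub>V d\<^esub> \<otimes>\<^bsub>V d\<^esub> x = x"
    using x by (intro V_eqI) (simp_all add: mult_V_closed one_in_carrier_V vact_mult vact_one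
      vact_in_streams)
  obtain r where r: "r \<in> valid d" "x = cls d r" using x by (auto simp: carrier_V_iff)
  then show "\<exists>y\<in>carrier (V d). y \<otimes>\<^bsub>V d\<^esub> x = \<one>\<^bsub>V d\<^esub>"
    using inverse_triple_mult_V[OF r(1)] cls_in_carrier[OF inverse_triple_valid[OF r(1)]] by blast
qed (simp_all add: mult_V_closed one_in_carrier_V)

lemma inv_V_cls: "r \<in> valid d \<Longrightarrow> inv\<^bsub>V d\<^esub> (cls d r) = cls d (inverse_triple r)"
  using group.inv_equality[OF group_V inverse_triple_mult_V] cls_in_carrier inverse_triple_valid
  by blast

lemma vact_inv:
  assumes "a \<in> carrier (V d)" "x \<in> streams {..<d}"
  shows "vact (inv\<^bsub>V d\<^esub> a) (vact a x) = x" "vact a (vact (inv\<^bsub>V d\<^esub> a) x) = x"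
proof -
  have "inv\<^bsub>V d\<^esub> a \<in> carrier (V d)" using group.inv_closed[OF group_V assms(1)] .
  then show "vact (inv\<^bsub>V d\<^esub> a) (vact a x) = x" "vact a (vact (inv\<^bsub>V d\<^esub> a) x) = x"
    using vact_mult assms vact_one group.l_inv[OF group_V] group.r_inv[OF group_V] by metis+
qed

lemma F_iff: "a \<in> F d \<longleftrightarrow> (\<exists>T U. (T, id, U) \<in> valid d \<and> a = cls d (T, id, U))"
proof
  assume a: "a \<in> F d"
  then obtain r T U where "r \<in> valid d" "a = cls d r" "(T, id, U) \<in> a"
    by (auto simp: F_def carrier_V_iff)
  then show "\<exists>T U. (T, id, U) \<in> valid d \<and> a = cls d (T, id, U)"
    using mem_cls_iff cls_eq_iff by metis
next
  assume "\<exists>T U. (T, id, U) \<in> valid d \<and> a = cls d (T, id, U)"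
  then obtain T U where "(T, id, U) \<in> valid d" "a = cls d (T, id, U)" by blast
  then show "a \<in> F d" using self_in_cls cls_in_carrier unfolding F_def by blast
qed

lemma subgroup_F: "subgroup (F d) (V d)"
proof (rule group.subgroupI[OF group_V])
  show "F d \<subseteq> carrier (V d)" by (auto simp: F_def)
  show "F d \<noteq> {}" using F_iff valid_one by blast
next
  fix a assume "a \<in> F d"
  then obtain T U where v: "(T, id, U) \<in> valid d" and a: "a = cls d (T, id, U)"
    by (auto simp: F_iff)
  have "inverse_triple (T, id, U) = (U, id, T)" by (simp add: inverse_triple_def inv_id)
  then show "inv\<^bsub>V d\<^esub> a \<in> F d"
    using inv_V_cls[OF v] inverse_triple_valid[OF v] a by (auto simp: F_iff)
next
  fix a b assume "a \<in> F d" "b \<in> F d"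
  then obtain T U T' U' where "(T, id, U) \<in> valid d" "a = cls d (T, id, U)"
    "(T', id, U') \<in> valid d" "b = cls d (T', id, U')"
    by (auto simp: F_iff)
  then show "a \<otimes>\<^bsub>V d\<^esub> b \<in> F d"
    using vmult_cls[of "(T, id, U)" "(T', id, U')"] by (auto simp: F_iff mult_V)
qed

lemma derived_F_subset_F: "derived (V d) (F d) \<subseteq> F d"
  using group.derived_incl[OF group_V order_refl subgroup_F] .

section \<open>Commutators supported in cones\<close>

lemma x0_at_in_F: "q \<in> lists {..<d} \<Longrightarrow> x0_at d q \<in> F d"
  using graft_x0_valid[of d q] d2 unfolding x0_at_def F_iff by auto

lemma x0_at_in_carrier: "q \<in> lists {..<d} \<Longrightarrow> x0_at d q \<in> carrier (V d)"
  using x0_at_in_F by (auto simp: F_def)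

lemma vact_x0_at:
  assumes "q \<in> lists {..<d}"
  shows "\<And>x. x \<in> streams {..<d} \<Longrightarrow> x \<notin> cone q \<Longrightarrow> vact (x0_at d q) x = x"
    and "\<And>z. z \<in> streams {..<d}
      \<Longrightarrow> vact (x0_at d q) (q @- z) = q @- tree_act (x0_range d, id, x0_domain d) z"
proof -
  have x0: "dary d (x0_range d)" "dary d (x0_domain d)"
    "nleaves (x0_range d) = nleaves (x0_domain d)"
    using x0_valid[of d] d2 by (auto simp: mem_valid)
  have v: "(graft d q (x0_range d), id, graft d q (x0_domain d)) \<in> valid d"
    using graft_x0_valid[OF _ assms] d2 by simp
  show "vact (x0_at d q) x = x" if "x \<in> streams {..<d}" "x \<notin> cone q" for x
    using vact_cls[OF v that(1)] tree_act_graft_outside[OF assms x0 that] by (simp add: x0_at_def)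
  show "vact (x0_at d q) (q @- z) = q @- tree_act (x0_range d, id, x0_domain d) z"
    if "z \<in> streams {..<d}" for z
    using vact_cls[OF v shift_streams[OF assms that]] tree_act_graft_inside[OF assms x0(2,3) that]
    by (simp add: x0_at_def)
qed

lemma commutator_at_in_derived: "q \<in> lists {..<d} \<Longrightarrow> commutator_at d q \<in> derived (V d) (F d)"
  using x0_at_in_F[of q] x0_at_in_F[of "q @ [d - 1, 0]"] d2
  unfolding commutator_at_def derived_def by (intro generate.incl) auto

lemma vact_commutator:
  assumes "a \<in> carrier (V d)" "b \<in> carrier (V d)" "x \<in> streams {..<d}"
  shows "vact (a \<otimes>\<^bsub>V d\<^esub> b \<otimes>\<^bsub>V d\<^esub> inv\<^bsub>V d\<^esub> a \<otimes>\<^bsub>V d\<^esub> inv\<^bsub>V d\<^esub> b) x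
    = vact a (vact b (vact (inv\<^bsub>V d\<^esub> a) (vact (inv\<^bsub>V d\<^esub> b) x)))"
  using assms
  by (simp add: vact_mult mult_V_closed group.inv_closed[OF group_V] vact_in_streams)

lemma vact_conj:
  assumes "g \<in> carrier (V d)" "w \<in> carrier (V d)" "x \<in> streams {..<d}"
  shows "vact (inv\<^bsub>V d\<^esub> g \<otimes>\<^bsub>V d\<^esub> w \<otimes>\<^bsub>V d\<^esub> g) x = vact (inv\<^bsub>V d\<^esub> g) (vact w (vact g x))"
proof -
  have "inv\<^bsub>V d\<^esub> g \<in> carrier (V d)" using group.inv_closed[OF group_V assms(1)] .
  then show ?thesis
    using vact_mult[OF mult_V_closed[OF _ assms(2)] assms(1,3)]
      vact_mult[OF _ assms(2) vact_in_streams[OF assms(1,3)]]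
    by simp
qed

lemma vact_inv_eqI:
  assumes "a \<in> carrier (V d)" "x \<in> streams {..<d}" "vact a x = y"
  shows "vact (inv\<^bsub>V d\<^esub> a) y = x"
  using vact_inv(1)[OF assms(1,2)] unfolding assms(3) .

lemma vact_inj:
  assumes "a \<in> carrier (V d)" "x \<in> streams {..<d}" "y \<in> streams {..<d}" "vact a x = vact a y"
  shows "x = y"
  using vact_inv_eqI[OF assms(1,2,4)] vact_inv(1)[OF assms(1,3)] by simp

lemma commutator_at_fixes_outside:
  assumes "q \<in> lists {..<d}" "x \<in> streams {..<d}" "x \<notin> cone q"
  shows "vact (commutator_at d q) x = x"
proof -
  let ?a = "x0_at d q" and ?b = "x0_at d (q @ [d - 1, 0])"
  have q': "q @ [d - 1, 0] \<in> lists {..<d}" using assms(1) d2 by auto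
  have ab: "?a \<in> carrier (V d)" "?b \<in> carrier (V d)" using x0_at_in_carrier assms(1) q' by auto
  have "x \<notin> cone (q @ [d - 1, 0])" using assms(3) cone_append_subset by blast
  then have "vact ?a x = x" "vact ?b x = x" using vact_x0_at(1) assms q' by auto
  moreover have "vact (inv\<^bsub>V d\<^esub> ?a) x = x" "vact (inv\<^bsub>V d\<^esub> ?b) x = x"
    using vact_inv_eqI[OF ab(1) assms(2)] vact_inv_eqI[OF ab(2) assms(2)] calculation by simp_all
  ultimately show ?thesis
    unfolding commutator_at_def using vact_commutator[OF ab assms(2)] by simp
qed

lemma commutator_at_moves:
  assumes "q \<in> lists {..<d}"
  shows "vact (commutator_at d q) ((q @ [d - 1, 0, 0, 0]) @- sconst 1)
    \<noteq> (q @ [d - 1, 0, 0, 0]) @- sconst 1"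
proof -
  let ?a = "x0_at d q" and ?b = "x0_at d (q @ [d - 1, 0])" and ?o = "sconst (1::nat)"
  let ?x = "(q @ [d - 1, 0, 0, 0]) @- ?o" and ?y = "(q @ [d - 1, 0, 0]) @- ?o"
    and ?y' = "(q @ [d - 1, d - 1, 0, 0]) @- ?o"
  have q': "q @ [d - 1, 0] \<in> lists {..<d}" using assms d2 by auto
  have o: "?o \<in> streams {..<d}" using d2 by (auto intro: sconst_streams)
  have streams: "?x \<in> streams {..<d}" "?y \<in> streams {..<d}" "?y' \<in> streams {..<d}"
    using assms d2 o by (auto intro!: shift_streams)
  have ab: "?a \<in> carrier (V d)" "?b \<in> carrier (V d)" using x0_at_in_carrier assms q' by auto
  have "[0] @- ?o \<in> streams {..<d}" "[d - 1, d - 1] @- [0, 0] @- ?o \<in> streams {..<d}"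
    using o d2 by (auto intro!: shift_streams)
  moreover have "vact ?b ?y = ?x"
    using vact_x0_at(2)[OF q', of "[0] @- ?o"] tree_act_x0(1)[OF d2] calculation(1) by simp
  then have 1: "vact (inv\<^bsub>V d\<^esub> ?b) ?x = ?y" using vact_inv_eqI ab streams by blast
  have 2: "vact ?a ?y' = ?y"
    using vact_x0_at(2)[OF assms, of "[d - 1, d - 1] @- [0, 0] @- ?o"] tree_act_x0(2)[OF d2]
      calculation(2)
    by simp
  then have 3: "vact (inv\<^bsub>V d\<^esub> ?a) ?y = ?y'" using vact_inv_eqI ab streams by blast
  have "?y' \<notin> cone (q @ [d - 1, 0])" using d2 by (simp add: shift_in_cone_append cone_Cons)
  then have 4: "vact ?b ?y' = ?y'" using vact_x0_at(1)[OF q'] streams by blast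
  have "vact (commutator_at d q) ?x = ?y"
    unfolding commutator_at_def using vact_commutator[OF ab streams(1)] 1 2 3 4 by simp
  moreover have "?y \<noteq> ?x"
  proof
    assume "?y = ?x"
    then have "?o = 0 ## ?o" by simp
    then have "shd ?o = shd (0 ## ?o)" by (rule arg_cong)
    then show False by simp
  qed
  ultimately show ?thesis by simp
qed

section \<open>Infinitely many conjugates\<close>

lemma nontrivial_moves_cone:
  assumes "w \<in> carrier (V d)" "w \<noteq> \<one>\<^bsub>V d\<^esub>"
  obtains p where "p \<in> lists {..<d}" "\<And>x. x \<in> streams {..<d} \<Longrightarrow> x \<in> cone p \<Longrightarrow> vact w x \<notin> cone p"
proof -
  obtain T \<sigma> U where r: "(T, \<sigma>, U) \<in> valid d" "w = cls d (T, \<sigma>, U)"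
    using assms(1) by (auto simp: carrier_V_iff)
  then have v: "dary d T" "dary d U" "nleaves T = nleaves U" "\<sigma> permutes {1..nleaves U}"
    by (auto simp: mem_valid)
  have "\<exists>k. 1 \<le> k \<and> k \<le> nleaves U \<and> leaf_word U k \<noteq> leaf_word T (\<sigma> k)"
  proof (rule ccontr)
    assume none: "\<not> ?thesis"
    have "vact w x = vact \<one>\<^bsub>V d\<^esub> x" if x: "x \<in> streams {..<d}" for x
    proof -
      obtain k y where k: "1 \<le> k" "k \<le> nleaves U" "x = leaf_word U k @- y"
        using leaf_word_shift_decomp[OF v(2) x] by blast
      then have "vact w x = leaf_word T (\<sigma> k) @- y"
        using vact_cls[OF r(1) x] r(2) tree_act_leaf by simp
      also have "\<dots> = x" using none k by auto
      finally show ?thesis using vact_one[OF x] by simp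
    qed
    then have "w = \<one>\<^bsub>V d\<^esub>" using V_eqI assms(1) one_in_carrier_V by blast
    with assms(2) show False by simp
  qed
  then obtain k where k: "1 \<le> k" "k \<le> nleaves U" "leaf_word U k \<noteq> leaf_word T (\<sigma> k)" by blast
  let ?u = "leaf_word U k" and ?t = "leaf_word T (\<sigma> k)"
  obtain a where a: "a \<le> 1" "\<And>y. ?t @- a ## y \<notin> cone (?u @ [a])"
    using escaping_letter[OF k(3)] by blast
  show ?thesis
  proof (rule that[of "?u @ [a]"])
    show "?u @ [a] \<in> lists {..<d}" using leaf_word_in_lists[OF v(2) k(1,2)] a(1) d2 by auto
  next
    fix x assume x: "x \<in> streams {..<d}" "x \<in> cone (?u @ [a])"
    define y where "y = sdrop (length (?u @ [a])) x"
    have "x = ?u @- a ## y" using shift_sdrop_cone[OF x(2)] by (simp add: y_def)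
    then have "vact w x = ?t @- a ## y"
      using vact_cls[OF r(1) x(1)] r(2) tree_act_leaf[OF k(1,2)] by simp
    then show "vact w x \<notin> cone (?u @ [a])" using a(2) by simp
  qed
qed

text \<open>At a point of the \<open>n\<close>-th subcone moved by \<open>h n\<close>, the \<open>m\<close>-th conjugate (\<open>m \<noteq> n\<close>)
  acts as \<open>w\<close>, while the \<open>n\<close>-th does not.\<close>

lemma infinite_conjugates_if_moves_cone:
  fixes h :: "nat \<Rightarrow> triple set" and q :: "nat \<Rightarrow> nat list"
  assumes w: "w \<in> carrier (V d)"
    and p: "\<And>x. x \<in> streams {..<d} \<Longrightarrow> x \<in> cone p \<Longrightarrow> vact w x \<notin> cone p"
    and h: "\<And>n. h n \<in> H" "\<And>n. h n \<in> carrier (V d)"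
    and supp: "\<And>n x. x \<in> streams {..<d} \<Longrightarrow> x \<notin> cone (q n) \<Longrightarrow> vact (h n) x = x"
    and moves: "\<And>n. \<exists>x\<in>streams {..<d} \<inter> cone (q n). vact (h n) x \<noteq> x"
    and sub: "\<And>n. cone (q n) \<subseteq> cone p"
    and disj: "\<And>m n. m \<noteq> n \<Longrightarrow> cone (q m) \<inter> cone (q n) = {}"
  shows "infinite (conjugates (V d) H w)"
proof -
  define f where "f n = inv\<^bsub>V d\<^esub> (h n) \<otimes>\<^bsub>V d\<^esub> w \<otimes>\<^bsub>V d\<^esub> h n" for n
  have vact_f: "vact (f n) x = vact (inv\<^bsub>V d\<^esub> (h n)) (vact w (vact (h n) x))"
    if "x \<in> streams {..<d}" for n x
    using vact_conj[OF h(2) w that] by (simp add: f_def)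
  have "f m \<noteq> f n" if "m \<noteq> n" for m n
  proof
    assume f: "f m = f n"
    obtain x where x: "x \<in> streams {..<d}" "x \<in> cone (q n)" "vact (h n) x \<noteq> x" using moves by blast
    have hx: "vact (h n) x \<in> streams {..<d}" using vact_in_streams[OF h(2) x(1)] .
    have wx: "vact w x \<in> streams {..<d}" "vact w x \<notin> cone p"
      using vact_in_streams[OF w x(1)] p[OF x(1)] sub[of n] x(2) by auto
    have h_wx: "vact (h k) (vact w x) = vact w x" for k
      using supp[OF wx(1)] wx(2) sub[of k] by blast
    have "x \<notin> cone (q m)" using disj[OF that] x(2) by blast
    then have "vact (f m) x = vact w x"
      using vact_f[OF x(1)] supp[OF x(1)] vact_inv_eqI[OF h(2) wx(1) h_wx] by simp
    then have conj_eq: "vact (inv\<^bsub>V d\<^esub> (h n)) (vact w (vact (h n) x)) = vact w x"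
      using f vact_f[OF x(1)] by simp
    have "vact w (vact (h n) x) = vact (h n) (vact (inv\<^bsub>V d\<^esub> (h n)) (vact w (vact (h n) x)))"
      using vact_inv(2)[OF h(2) vact_in_streams[OF w hx]] by simp
    also have "\<dots> = vact w x" using conj_eq h_wx by simp
    finally have "vact (h n) x = x" using vact_inj[OF w hx x(1)] by blast
    then show False using x(3) by contradiction
  qed
  then have "inj f" by (intro injI) blast
  then have "infinite (range f)" using finite_imageD[of f UNIV] by auto
  moreover have "range f \<subseteq> conjugates (V d) H w" using h(1) by (auto simp: f_def conjugates_def)
  ultimately show ?thesis using infinite_super by blast
qed

lemma infinite_derived_conjugates:
  assumes "w \<in> carrier (V d)" "w \<noteq> \<one>\<^bsub>V d\<^esub>"
  shows "infinite (conjugates (V d) (derived (V d) (F d)) w)"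
proof -
  obtain p where p: "p \<in> lists {..<d}"
      "\<And>x. x \<in> streams {..<d} \<Longrightarrow> x \<in> cone p \<Longrightarrow> vact w x \<notin> cone p"
    using nontrivial_moves_cone[OF assms] by blast
  define q where "q n = p @ replicate n 0 @ [1]" for n
  have q: "q n \<in> lists {..<d}" for n using p(1) d2 by (auto simp: q_def)
  show ?thesis
  proof (rule infinite_conjugates_if_moves_cone[OF assms(1) p(2)])
    show "commutator_at d (q n) \<in> derived (V d) (F d)" for n using commutator_at_in_derived[OF q] .
    then show "commutator_at d (q n) \<in> carrier (V d)" for n
      using derived_F_subset_F by (auto simp: F_def)
    show "vact (commutator_at d (q n)) x = x" if "x \<in> streams {..<d}" "x \<notin> cone (q n)" for n x
      using commutator_at_fixes_outside[OF q that] .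
    show "\<exists>x\<in>streams {..<d} \<inter> cone (q n). vact (commutator_at d (q n)) x \<noteq> x" for n
      using commutator_at_moves[OF q] q d2 sconst_streams[of 1 "{..<d}"]
      by (intro bexI[of _ "(q n @ [d - 1, 0, 0, 0]) @- sconst 1"])
        (auto intro!: shift_streams simp: shift_in_cone_append)
    show "cone (q n) \<subseteq> cone p" for n unfolding q_def by (rule cone_append_subset)
    show "cone (q m) \<inter> cone (q n) = {}" if "m \<noteq> n" for m n
      using not_prefix_replicate_append that unfolding q_def by (intro cones_disjoint) auto
  qed
qed

end

text \<open>Of the hypotheses on \<open>W\<close> only \<open>W \<subseteq> carrier (V d)\<close> is used: every nontrivial element
  of \<open>V d\<close> has infinitely many \<open>[F d, F d]\<close>-conjugates, and \<open>[F d, F d] \<subseteq> F d\<close>.\<close>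

theorem mainTheorem6:
  fixes d :: nat and W :: "triple set set"
  assumes "d \<ge> 2"
    and "subgroup W (V d)"
    and "derived (V d) (F d) \<subseteq> W"
  shows "(\<forall>w\<in>W. w \<noteq> \<one>\<^bsub>V d\<^esub> \<longrightarrow> infinite (conjugates (V d) (derived (V d) (F d)) w))
       \<and> (F d \<subseteq> W \<longrightarrow> (\<forall>w\<in>W. w \<noteq> \<one>\<^bsub>V d\<^esub> \<longrightarrow> infinite (conjugates (V d) (F d) w)))"
proof -
  have derived: "infinite (conjugates (V d) (derived (V d) (F d)) w)" if "w \<in> W" "w \<noteq> \<one>\<^bsub>V d\<^esub>" for w
    using infinite_derived_conjugates[OF assms(1)] subgroup.subset[OF assms(2)] that by blast
  have "conjugates (V d) (derived (V d) (F d)) w \<subseteq> conjugates (V d) (F d) w" for w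
    using derived_F_subset_F[OF assms(1)] by (auto simp: conjugates_def)
  then show ?thesis using derived infinite_super by metis
qed

end
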